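(* Let $U_p^*,U_g^*\in\mathbb{R}^{d\times r}$ with $U_p^*$ of rank $r$, $\Delta_U^*=U_g^*-U_p^*$, and let $X_p=\mathcal{A}_p(U_p^*U_p^{*T})+\epsilon_p\in\mathbb{R}^{d^2n_p}$ where $\mathcal{A}_p:\mathbb{R}^{d\times d}\to\mathbb{R}^{d^2n_p}$ is a fixed linear operator satisfying $2r$-RWC$(\alpha_p/d^2,\beta_p/d^2)$ and $\epsilon_p$ has independent $\frac d2$-subgaussian entries. Let $\widehat U_p$ be a global minimizer of $\frac1{d^2n_p}\|X_p-\mathcal{A}_p(UU^T)\|^2$ over $U\in\mathbb{R}^{d\times r}$ and $\omega=\|U_p^*(R_{(\widehat U_p,U_p^* )}-R_{(\widehat U_p,U_g^* )})\|_{2,1}$. Then for $\delta\in(0,1)$, with probability at least $1-\delta$, $$\ell(\widehat U_p,U_g^* )\le\|\Delta_U^*\|_{2,1}+\omega+\frac{8d\sqrt{2\beta_p}}{(3\alpha_p-2\beta_p)\sigma_r(U_p^* )}\sqrt{\frac{d\big(2r(2d+1)\log(36\sqrt2)+\log\frac2\delta\big)}{n_p}},$$ in particular $\ell(\widehat U_p,U_g^* )=\mathcal O\big(\|\Delta_U^*\|_{2,1}+\omega+d\sqrt{(d^2+d\log(1/\delta))/n_p}\big)$.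
   Context: Notation: $\Theta^j$ is the $j$-th row of $\Theta$; $\|\Theta\|_{2,1}=\sum_j\|\Theta^j\|$; $\|\Theta\|_F$ Frobenius norm; $\sigma_r$ the $r$-th largest singular value. A linear operator $\mathcal{A}:\mathbb{R}^{d\times d}\to\mathbb{R}^n$ is given by fixed matrices $A_i$ via $\mathcal{A}(\Theta)_i=\langle A_i,\Theta\rangle$. $\mathcal{A}$ satisfies $k$-RWC$(\alpha,\beta)$ if $3\alpha>2\beta$ and $\alpha\|Z\|_F^2\le\frac1n\|\mathcal{A}(Z)\|^2\le\beta\|Z\|_F^2$ for all $Z$ with rank$(Z)\le k$. A real random variable $z$ is $\sigma$-subgaussian if $\mathbb{E}[e^{tz}]\le e^{t^2\sigma^2/2}$ for all $t$. For $\widehat U,U^*\in\mathbb{R}^{d\times r}$, $R_{(\widehat U,U^* )}=\arg\min_{R^TR=RR^T=I}\|\widehat U-U^*R\|_F$ and $\ell(\widehat U,U^* )=\|\widehat U-U^*R_{(\widehat U,U^* )}\|_{2,1}$. *)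

theory Defs
  imports "HOL-Analysis.Analysis" "HOL-Probability.Probability"
begin

definition norm21 :: "real^'c^'r \<Rightarrow> real" where
  "norm21 T = (\<Sum>j\<in>UNIV. norm (T $ j))"

text \<open>Frobenius norm of a real^'c^'r matrix is its (Euclidean) norm; the linear
  operator given by the matrices A i (i < n) is Z \<mapsto> (\<langle>A i, Z\<rangle>)_{i<n}.\<close>
definition opnormsq :: "(nat \<Rightarrow> real^'d^'d) \<Rightarrow> nat \<Rightarrow> real^'d^'d \<Rightarrow> real" where
  "opnormsq A n Z = (\<Sum>i<n. (A i \<bullet> Z)^2)"

definition RWC :: "nat \<Rightarrow> real \<Rightarrow> real \<Rightarrow> (nat \<Rightarrow> real^'d^'d) \<Rightarrow> nat \<Rightarrow> bool" where
  "RWC k \<alpha> \<beta> A n \<longleftrightarrow> 3 * \<alpha> > 2 * \<beta> \<and>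
     (\<forall>Z::real^'d^'d. rank Z \<le> k \<longrightarrow>
        \<alpha> * (norm Z)^2 \<le> opnormsq A n Z / real n \<and> opnormsq A n Z / real n \<le> \<beta> * (norm Z)^2)"

definition subgaussian :: "'a measure \<Rightarrow> ('a \<Rightarrow> real) \<Rightarrow> real \<Rightarrow> bool" where
  "subgaussian M z \<sigma> \<longleftrightarrow> (\<forall>t::real. integrable M (\<lambda>x. exp (t * z x)) \<and>
      (\<integral>x. exp (t * z x) \<partial>M) \<le> exp (t^2 * \<sigma>^2 / 2))"

definition procR :: "real^'r^'d \<Rightarrow> real^'r^'d \<Rightarrow> real^'r^'r" where
  "procR Uh Us = (SOME R. orthogonal_matrix R \<and>
      (\<forall>Q. orthogonal_matrix Q \<longrightarrow> norm (Uh - Us ** R) \<le> norm (Uh - Us ** Q)))"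

definition ell :: "real^'r^'d \<Rightarrow> real^'r^'d \<Rightarrow> real" where
  "ell Uh Us = norm21 (Uh - Us ** procR Uh Us)"

text \<open>sigma_r of a d x r matrix: the r-th largest (= smallest) singular value, i.e. the
  square root of the smallest eigenvalue of U^T U.\<close>
definition sigma_r :: "real^'r^'d \<Rightarrow> real" where
  "sigma_r U = sqrt (Min {c. \<exists>v. v \<noteq> 0 \<and> (transpose U ** U) *v v = c *\<^sub>R v})"

definition loss :: "(nat \<Rightarrow> real^'d^'d) \<Rightarrow> nat \<Rightarrow> (nat \<Rightarrow> real) \<Rightarrow> real^'r^'d \<Rightarrow> real" where
  "loss A N X U = (\<Sum>i<N. (X i - A i \<bullet> (U ** transpose U))^2) / real N"

end

theory Submission
  imports Defs
begin

text \<open>Write \<open>D = Uhat Uhat\<^sup>T - Up Up\<^sup>T\<close>, a matrix of rank at most \<open>2r\<close>, and \<open>G = \<Sum>\<^sub>i \<epsilon>\<^sub>i A\<^sub>i\<close>.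
  Comparing the loss of \<open>Uhat\<close> with that of \<open>Up\<close> gives \<open>\<parallel>\<A>(D)\<parallel>\<^sup>2 \<le> 2 \<langle>G, D\<rangle>\<close>, and the
  restricted condition turns the left-hand side into \<open>\<alpha> n\<^sub>p \<parallel>D\<parallel>\<^sub>F\<^sup>2\<close>.  Every rank-\<open>2r\<close>
  matrix factors as \<open>Q B\<close> with \<open>\<parallel>Q\<parallel>\<^sub>o\<^sub>p \<le> 1\<close> and \<open>\<parallel>B\<parallel>\<^sub>F\<close> equal to its Frobenius norm, so a
  \<open>1/4\<close>-net of such products (of size \<open>81\<^sup>2\<^sup>d\<^sup>r\<close>, by a volume argument) controls
  \<open>\<langle>G, D\<rangle> / \<parallel>D\<parallel>\<^sub>F\<close> up to a factor 2; a subgaussian tail bound and a union bound over the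
  net bound \<open>\<parallel>D\<parallel>\<^sub>F\<close> with the stated probability.

  To pass from \<open>D\<close> to the factors, the optimality of the Procrustes rotation \<open>R\<close> makes
  \<open>(Up R)\<^sup>T Uhat\<close> symmetric and positive semidefinite, which yields
  \<open>(4/5) \<sigma>\<^sub>r(Up)\<^sup>2 \<parallel>Uhat - Up R\<parallel>\<^sub>F\<^sup>2 \<le> \<parallel>D\<parallel>\<^sub>F\<^sup>2\<close>.  The triangle inequality for the
  \<open>(2,1)\<close>-norm and \<open>\<parallel>\<cdot>\<parallel>\<^sub>2\<^sub>,\<^sub>1 \<le> \<surd>d \<parallel>\<cdot>\<parallel>\<^sub>F\<close> finish the proof.\<close>

lemma matrix_diff_ldistrib: "(A::real^'n^'m) ** (B - C) = A ** B - A ** C"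
  by (simp add: vec_eq_iff matrix_matrix_mult_def sum_subtractf algebra_simps)

lemma matrix_add_rdistrib: "((A::real^'n^'m) + B) ** C = A ** C + B ** C"
  by (simp add: vec_eq_iff matrix_matrix_mult_def sum.distrib algebra_simps)

lemma matrix_diff_rdistrib: "((A::real^'n^'m) - B) ** C = A ** C - B ** C"
  by (simp add: vec_eq_iff matrix_matrix_mult_def sum_subtractf algebra_simps)

lemma transpose_add: "transpose ((A::real^'n^'m) + B) = transpose A + transpose B"
  by (simp add: vec_eq_iff transpose_def)

lemma transpose_diff: "transpose ((A::real^'n^'m) - B) = transpose A - transpose B"
  by (simp add: vec_eq_iff transpose_def)

lemma trace_transpose: "trace (transpose (A::'a::comm_semiring_1^'n^'n)) = trace A"
  by (simp add: trace_def transpose_def)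

lemma inner_eq_trace:
  fixes A B :: "real^'c^'r"
  shows "A \<bullet> B = trace (transpose A ** B)"
proof -
  have "trace (transpose A ** B) = (\<Sum>i\<in>UNIV. \<Sum>k\<in>UNIV. A$k$i * B$k$i)"
    by (simp add: trace_def matrix_matrix_mult_def transpose_def)
  also have "\<dots> = (\<Sum>k\<in>UNIV. \<Sum>i\<in>UNIV. A$k$i * B$k$i)" by (rule sum.swap)
  also have "\<dots> = A \<bullet> B" by (simp add: inner_vec_def)
  finally show ?thesis by simp
qed

lemma inner_eq_sum_columns:
  fixes A B :: "real^'c^'r"
  shows "A \<bullet> B = (\<Sum>j\<in>UNIV. column j A \<bullet> column j B)"
proof -
  have "A \<bullet> B = (\<Sum>i\<in>UNIV. \<Sum>j\<in>UNIV. A$i$j * B$i$j)" by (simp add: inner_vec_def)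
  also have "\<dots> = (\<Sum>j\<in>UNIV. \<Sum>i\<in>UNIV. A$i$j * B$i$j)" by (rule sum.swap)
  also have "\<dots> = (\<Sum>j\<in>UNIV. column j A \<bullet> column j B)" by (simp add: inner_vec_def column_def)
  finally show ?thesis .
qed

lemma norm_squared_columns:
  fixes A :: "real^'c^'r"
  shows "(norm A)^2 = (\<Sum>j\<in>UNIV. (norm (column j A))^2)"
  by (simp add: power2_norm_eq_inner inner_eq_sum_columns)

lemma norm_squared_rows:
  fixes A :: "real^'c^'r"
  shows "(norm A)^2 = (\<Sum>k\<in>UNIV. (norm (A$k))^2)"
  by (simp add: power2_norm_eq_inner inner_vec_def)

lemma rank_matrix_mult_le_card: "rank ((X::real^'k^'m) ** Y) \<le> CARD('k)"
  using rank_mul_le_left[of X Y] rank_bound[of X] by simp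

lemma inner_gram_matrix:
  fixes A :: "real^'r^'d"
  shows "x \<bullet> ((transpose A ** A) *v y) = (A *v x) \<bullet> (A *v y)"
proof -
  have "(transpose A ** A) *v y = (A *v y) v* A"
    by (simp flip: matrix_vector_mul_assoc)
  then show ?thesis by (metis dot_lmul_matrix inner_commute)
qed

lemma row_matrix_mult: "((X::real^'k^'m) ** G) $ i = (X $ i) v* G"
  by (simp add: vec_eq_iff matrix_matrix_mult_def vector_matrix_mult_def mult.commute)

lemma norm_orthogonal_matrix_vector:
  assumes "orthogonal_matrix (G::real^'n^'n)"
  shows "norm (G *v x) = norm x"
proof -
  have "(G *v x) \<bullet> (G *v x) = x \<bullet> x"
    using assms by (simp flip: inner_gram_matrix add: orthogonal_matrix)
  then show ?thesis by (simp add: norm_eq_sqrt_inner)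
qed

lemma norm_vector_orthogonal_matrix:
  assumes "orthogonal_matrix (G::real^'n^'n)"
  shows "norm (x v* G) = norm x"
  using assms norm_orthogonal_matrix_vector[of "transpose G"] by simp

lemma norm_matrix_orthogonal_matrix:
  fixes X :: "real^'n^'m"
  assumes "orthogonal_matrix G"
  shows "norm (X ** G) = norm X"
proof -
  have "(norm (X ** G))^2 = (norm X)^2"
    unfolding norm_squared_rows row_matrix_mult
    using assms by (simp add: norm_vector_orthogonal_matrix)
  then show ?thesis by simp
qed

section \<open>The Procrustes rotation\<close>

lemma compact_orthogonal_matrices: "compact {G::real^'n^'n. orthogonal_matrix G}"
proof (rule compact_eq_bounded_closed[THEN iffD2], rule conjI)
  have "norm G = sqrt (real CARD('n))" if "orthogonal_matrix G" for G :: "real^'n^'n"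
  proof -
    have "(norm G)^2 = (\<Sum>j\<in>(UNIV::'n set). 1)"
      unfolding norm_squared_columns using that
      by (simp add: orthogonal_matrix_orthonormal_columns)
    then show ?thesis by (simp add: real_sqrt_unique)
  qed
  then show "bounded {G::real^'n^'n. orthogonal_matrix G}"
    unfolding bounded_iff by (metis mem_Collect_eq order_refl)
  have "{G::real^'n^'n. orthogonal_matrix G} = {G. transpose G ** G = mat 1}"
    by (simp add: orthogonal_matrix)
  also have "\<dots> = (\<Inter>i. \<Inter>j. {G. (transpose G ** G) $ i $ j = mat 1 $ i $ j})"
    by (auto simp: vec_eq_iff)
  also have "closed \<dots>"
    unfolding matrix_matrix_mult_def transpose_def
    by (intro closed_INT ballI closed_Collect_eq continuous_intros)
  finally show "closed {G::real^'n^'n. orthogonal_matrix G}" .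
qed

lemma procR:
  fixes Uh Us :: "real^'r^'d"
  shows "orthogonal_matrix (procR Uh Us)"
    and "\<And>Q. orthogonal_matrix Q \<Longrightarrow> norm (Uh - Us ** procR Uh Us) \<le> norm (Uh - Us ** Q)"
proof -
  have "\<exists>R\<in>{R::real^'r^'r. orthogonal_matrix R}. \<forall>Q\<in>{R. orthogonal_matrix R}.
      norm (Uh - Us ** R) \<le> norm (Uh - Us ** Q)"
  proof (rule continuous_attains_inf[OF compact_orthogonal_matrices])
    show "{R::real^'r^'r. orthogonal_matrix R} \<noteq> {}" using orthogonal_matrix_id by blast
    show "continuous_on {R::real^'r^'r. orthogonal_matrix R} (\<lambda>R. norm (Uh - Us ** R))"
      unfolding matrix_matrix_mult_def by (intro continuous_intros)
  qed
  then have "\<exists>R. orthogonal_matrix R \<and>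
      (\<forall>Q. orthogonal_matrix Q \<longrightarrow> norm (Uh - Us ** R) \<le> norm (Uh - Us ** Q))" by blast
  from someI_ex[OF this, folded procR_def]
  show "orthogonal_matrix (procR Uh Us)"
    and "\<And>Q. orthogonal_matrix Q \<Longrightarrow> norm (Uh - Us ** procR Uh Us) \<le> norm (Uh - Us ** Q)"
    by blast+
qed

lemma linear_le_quadratic_imp_zero:
  fixes D E :: real
  assumes "\<And>t. t * D \<le> t^2 * E"
  shows "D = 0"
proof (rule ccontr)
  assume "D \<noteq> 0"
  define t where "t = D / (2 * (\<bar>E\<bar> + 1))"
  have "t * D = D^2 / (2 * (\<bar>E\<bar> + 1))" by (simp add: t_def power2_eq_square)
  then have tD: "t * D > 0" using \<open>D \<noteq> 0\<close> by (simp add: add_pos_nonneg)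
  have "t^2 * E \<le> t^2 * \<bar>E\<bar>" by (simp add: mult_left_mono)
  also have "\<dots> = (t * D) * (\<bar>E\<bar> / (2 * (\<bar>E\<bar> + 1)))"
    by (simp add: t_def power2_eq_square)
  also have "\<dots> \<le> (t * D) * (1/2)"
    using tD by (intro mult_left_mono) (auto simp: divide_le_eq)
  finally show False using assms[of t] tD by linarith
qed

definition householder :: "real^'n \<Rightarrow> real^'n^'n" where
  "householder v = mat 1 - 2 *\<^sub>R (\<chi> i j. v$i * v$j)"

lemma column_householder: "column j (householder v) = axis j 1 - (2 * v$j) *\<^sub>R v"
  by (simp add: householder_def column_def vec_eq_iff axis_def mat_def)

lemma orthogonal_matrix_householder:
  assumes "norm v = 1"
  shows "orthogonal_matrix (householder v)"
proof -
  have vv: "v \<bullet> v = 1" using assms by (simp add: norm_eq_1)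
  have "(axis i 1 - (2 * v$i) *\<^sub>R v) \<bullet> (axis j 1 - (2 * v$j) *\<^sub>R v) = (if i = j then 1 else 0)" for i j
    unfolding inner_diff_left inner_diff_right inner_scaleR_left inner_scaleR_right inner_axis_axis
    by (simp add: inner_axis inner_axis' vv inner_commute algebra_simps)
  then show ?thesis
    unfolding orthogonal_matrix_orthonormal_columns column_householder
    by (simp add: norm_eq_1 orthogonal_def)
qed

lemma inner_householder:
  fixes C :: "real^'n^'n"
  shows "C \<bullet> householder v = trace C - 2 * (v \<bullet> (C *v v))"
proof -
  have "C \<bullet> (\<chi> i j. v$i * v$j) = v \<bullet> (C *v v)"
    by (simp add: inner_vec_def matrix_vector_mult_def sum_distrib_left mult_ac)
  moreover have "C \<bullet> mat 1 = trace C"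
    unfolding inner_vec_def trace_def by (simp add: mat_def if_distrib cong: if_cong)
  ultimately show ?thesis by (simp add: householder_def inner_diff_right)
qed

definition givens :: "'n \<Rightarrow> 'n \<Rightarrow> real \<Rightarrow> real \<Rightarrow> real^'n::finite^'n" where
  "givens a b c s = (\<chi> i j. (if j = a then c *\<^sub>R axis a 1 + s *\<^sub>R axis b 1
     else if j = b then (-s) *\<^sub>R axis a 1 + c *\<^sub>R axis b 1 else axis j 1) $ i)"

lemma column_givens:
  "column j (givens a b c s) = (if j = a then c *\<^sub>R axis a 1 + s *\<^sub>R axis b 1
     else if j = b then (-s) *\<^sub>R axis a 1 + c *\<^sub>R axis b 1 else axis j 1)"
  by (simp add: givens_def column_def vec_eq_iff)

lemma orthogonal_matrix_givens:
  assumes "a \<noteq> b" and "c^2 + s^2 = 1"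
  shows "orthogonal_matrix (givens a b c s)"
proof -
  have ax: "\<And>i j. axis i 1 \<bullet> axis j (1::real) = (if i = j then 1 else 0)"
    by (simp add: inner_axis_axis)
  show ?thesis
    unfolding orthogonal_matrix_orthonormal_columns column_givens norm_eq_1 orthogonal_def
    using assms by (auto simp: ax power2_eq_square algebra_simps)
qed

lemma inner_givens:
  fixes C :: "real^'n::finite^'n"
  assumes "a \<noteq> b"
  shows "C \<bullet> givens a b c s = trace C + (c - 1) * (C$a$a + C$b$b) + s * (C$b$a - C$a$b)"
proof -
  define w where "w j = column j (givens a b c s) - axis j 1" for j
  have "C \<bullet> givens a b c s = (\<Sum>j\<in>UNIV. column j C \<bullet> axis j 1) + (\<Sum>j\<in>UNIV. column j C \<bullet> w j)"
    by (simp add: inner_eq_sum_columns w_def inner_diff_right sum_subtractf)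
  also have "(\<Sum>j\<in>UNIV. column j C \<bullet> w j) = (\<Sum>j\<in>{a,b}. column j C \<bullet> w j)"
    by (rule sum.mono_neutral_right) (auto simp: w_def column_givens)
  also have "\<dots> = (c - 1) * (C$a$a + C$b$b) + s * (C$b$a - C$a$b)"
    using assms by (simp add: w_def column_givens inner_axis algebra_simps) (simp add: column_def)
  finally show ?thesis by (simp add: inner_axis column_def trace_def add.assoc)
qed

text \<open>If the identity maximises \<open>G \<mapsto> C \<bullet> G\<close> over the orthogonal group, testing against Householder
  reflections shows that \<open>C\<close> is positive semidefinite, and testing against plane rotations that it
  is symmetric.\<close>

lemma psd_if_identity_maximises_inner:
  fixes C :: "real^'n^'n"
  assumes max: "\<And>G. orthogonal_matrix G \<Longrightarrow> C \<bullet> G \<le> trace C"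
  shows "0 \<le> v \<bullet> (C *v v)"
proof (cases "v = 0")
  case False
  define u where "u = v /\<^sub>R norm v"
  have "norm u = 1" using False by (simp add: u_def)
  then have "C \<bullet> householder u \<le> trace C"
    by (intro max orthogonal_matrix_householder)
  then have "0 \<le> u \<bullet> (C *v u)" by (simp add: inner_householder)
  moreover have "v \<bullet> (C *v v) = (norm v)^2 * (u \<bullet> (C *v u))"
    using False by (simp add: u_def matrix_vector_mult_scaleR power2_eq_square field_simps)
  ultimately show ?thesis by simp
qed simp

lemma symmetric_if_identity_maximises_inner:
  fixes C :: "real^'n^'n"
  assumes max: "\<And>G. orthogonal_matrix G \<Longrightarrow> C \<bullet> G \<le> trace C"
  shows "transpose C = C"
proof -
  have "C$b$a - C$a$b = 0" if ab: "a \<noteq> b" for a b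
  proof (rule linear_le_quadratic_imp_zero)
    fix t :: real
    define c where "c = (1 - t^2) / (1 + t^2)"
    define s where "s = 2 * t / (1 + t^2)"
    have p: "1 + t^2 > 0" by (simp add: add_pos_nonneg)
    \<comment> \<open>the rational parametrisation of the circle\<close>
    have "c^2 + s^2 = 1"
      using p by (simp add: c_def s_def divide_simps) (simp add: power2_eq_square algebra_simps)
    then have "C \<bullet> givens a b c s \<le> trace C"
      by (intro max orthogonal_matrix_givens ab)
    then have "(c - 1) * (C$a$a + C$b$b) + s * (C$b$a - C$a$b) \<le> 0"
      by (simp add: inner_givens[OF ab])
    then have "(1 + t^2) * ((c - 1) * (C$a$a + C$b$b) + s * (C$b$a - C$a$b)) \<le> 0"
      using p by (simp add: mult_nonneg_nonpos)
    moreover have "(1 + t^2) * ((c - 1) * (C$a$a + C$b$b) + s * (C$b$a - C$a$b))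
        = 2 * (t * (C$b$a - C$a$b) - t^2 * (C$a$a + C$b$b))"
    proof -
      have e1: "(1 + t^2) * (c - 1) = -2 * t^2" and e2: "(1 + t^2) * s = 2 * t"
        using p by (simp_all add: c_def s_def field_simps)
      have "(1 + t^2) * ((c - 1) * (C$a$a + C$b$b) + s * (C$b$a - C$a$b))
         = ((1 + t^2) * (c - 1)) * (C$a$a + C$b$b) + ((1 + t^2) * s) * (C$b$a - C$a$b)"
        by (simp add: algebra_simps)
      then show ?thesis unfolding e1 e2 by (simp add: algebra_simps)
    qed
    ultimately show "t * (C$b$a - C$a$b) \<le> t^2 * (C$a$a + C$b$b)" by simp
  qed
  then have "C$b$a = C$a$b" for a b by (cases "a = b") auto
  then show ?thesis by (simp add: vec_eq_iff transpose_def)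
qed

section \<open>A perturbation bound for Gram matrices\<close>

lemma inner_matrix_mult_left: "((A::real^'k^'m) ** B) \<bullet> (C::real^'n^'m) = B \<bullet> (transpose A ** C)"
  by (simp add: inner_eq_trace matrix_transpose_mul matrix_mul_assoc)

lemma inner_matrix_mult_right: "((A::real^'k^'m) ** B) \<bullet> (C::real^'n^'m) = A \<bullet> (C ** transpose B)"
  by (simp add: inner_eq_trace matrix_transpose_mul matrix_mul_assoc trace_mul_sym[of _ "transpose B"])

lemma inner_transpose: "transpose (A::real^'n^'m) \<bullet> transpose B = A \<bullet> B"
  by (simp add: inner_vec_def transpose_def) (rule sum.swap)

lemma norm_transpose: "norm (transpose (A::real^'n^'m)) = norm A"
  by (simp add: norm_eq_sqrt_inner inner_transpose)

lemma sum_rows_quadratic_form: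
  fixes H :: "real^'r^'d" and C :: "real^'r^'r"
  shows "(\<Sum>k\<in>UNIV. H$k \<bullet> (C *v H$k)) = (H ** transpose C) \<bullet> H"
  by (simp add: inner_vec_def matrix_vector_mult_def matrix_matrix_mult_def transpose_def
      sum_distrib_left sum_distrib_right mult_ac)

lemma gram_perturbation_expansion:
  fixes X H :: "real^'r^'d"
  defines "M \<equiv> transpose X ** H" and "N \<equiv> transpose H ** H"
  assumes symM: "transpose M = M"
  shows "(norm (X ** transpose H + H ** transpose X + H ** transpose H))^2
    = N \<bullet> N + 2 * (norm (X ** transpose H))^2 + 2 * (M \<bullet> M) + 4 * (N \<bullet> M)"
proof -
  let ?P = "X ** transpose H" and ?Q = "H ** transpose X" and ?R = "H ** transpose H"
  have Q: "?Q = transpose ?P" and R: "transpose ?R = ?R"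
    by (simp_all add: matrix_transpose_mul)
  have "?P \<bullet> ?Q = transpose H \<bullet> (M ** transpose X)"
    by (simp add: inner_matrix_mult_left matrix_mul_assoc M_def)
  also have "\<dots> = M \<bullet> transpose M"
    unfolding inner_commute[of "transpose H"] inner_matrix_mult_right
    by (simp add: M_def matrix_transpose_mul)
  also have "\<dots> = M \<bullet> M" by (simp add: symM)
  finally have PQ: "?P \<bullet> ?Q = M \<bullet> M" .
  have PR: "?P \<bullet> ?R = N \<bullet> M"
  proof -
    have "?P \<bullet> ?R = transpose H \<bullet> (M ** transpose H)"
      by (simp add: inner_matrix_mult_left matrix_mul_assoc M_def)
    also have "\<dots> = M \<bullet> N"
      unfolding inner_commute[of "transpose H"] inner_matrix_mult_right by (simp add: N_def)
    finally show ?thesis by (simp add: inner_commute)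
  qed
  have QR: "?Q \<bullet> ?R = N \<bullet> M"
    using PR inner_transpose[of ?P ?R] by (simp only: Q R)
  have RR: "?R \<bullet> ?R = N \<bullet> N"
  proof -
    have "?R \<bullet> ?R = transpose H \<bullet> (N ** transpose H)"
      by (simp add: inner_matrix_mult_left matrix_mul_assoc N_def)
    also have "\<dots> = N \<bullet> N"
      unfolding inner_commute[of "transpose H"] inner_matrix_mult_right by (simp add: N_def)
    finally show ?thesis .
  qed
  have QQ: "?Q \<bullet> ?Q = ?P \<bullet> ?P"
    unfolding Q by (rule inner_transpose)
  have "(norm (?P + ?Q + ?R))^2
      = ?P \<bullet> ?P + ?Q \<bullet> ?Q + ?R \<bullet> ?R + 2 * (?P \<bullet> ?Q) + 2 * (?P \<bullet> ?R) + 2 * (?Q \<bullet> ?R)"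
    by (simp add: power2_norm_eq_inner inner_add_left inner_add_right
        inner_commute[of ?Q ?P] inner_commute[of ?R ?P] inner_commute[of ?R ?Q])
  then show ?thesis
    by (simp add: QQ PQ PR QR RR power2_norm_eq_inner)
qed

lemma gram_perturbation_lower_bound:
  fixes X H :: "real^'r^'d"
  assumes symM: "transpose (transpose X ** H) = transpose X ** H"
    and psd: "\<And>v. 0 \<le> v \<bullet> ((transpose X ** (X + H)) *v v)"
  shows "(4/5) * (norm (X ** transpose H))^2
    \<le> (norm (X ** transpose H + H ** transpose X + H ** transpose H))^2"
proof -
  define M where "M = transpose X ** H"
  define N where "N = transpose H ** H"
  define c where "c = (norm (X ** transpose H))^2"
  have "0 \<le> (H ** transpose (transpose X ** (X + H))) \<bullet> H"
    unfolding sum_rows_quadratic_form[symmetric] by (intro sum_nonneg psd)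
  also have "\<dots> = ((H ** transpose X) ** X) \<bullet> H + (H ** M) \<bullet> H"
    using symM by (simp add: M_def matrix_add_ldistrib matrix_add_rdistrib transpose_add
        matrix_transpose_mul matrix_mul_assoc inner_add_left)
  also have "((H ** transpose X) ** X) \<bullet> H = c"
    by (simp add: c_def inner_matrix_mult_right power2_norm_eq_inner
        norm_transpose[of "X ** transpose H", symmetric] matrix_transpose_mul)
  also have "(H ** M) \<bullet> H = M \<bullet> N"
    by (simp only: inner_matrix_mult_left N_def)
  finally have cross: "- c \<le> N \<bullet> M" by (simp add: inner_commute)
  have "\<bar>N \<bullet> M\<bar> \<le> norm N * norm M" by (rule Cauchy_Schwarz_ineq2)
  then have "\<bar>N \<bullet> M\<bar>^2 \<le> (norm N * norm M)^2" by (intro power_mono) auto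
  then have CS: "(N \<bullet> M)^2 \<le> (N \<bullet> N) * (M \<bullet> M)"
    by (simp add: power_mult_distrib power2_norm_eq_inner)
  \<comment> \<open>\<open>(a + 2b)^2 \<ge> 8ab \<ge> (14/5)^2 t^2\<close>\<close>
  have "0 \<le> N \<bullet> N + 2 * (M \<bullet> M) + (14/5) * (N \<bullet> M)"
  proof (rule ccontr)
    define a b t where "a = N \<bullet> N" and "b = M \<bullet> M" and "t = N \<bullet> M"
    have ab: "a \<ge> 0" "b \<ge> 0" by (simp_all add: a_def b_def)
    assume "\<not> ?thesis"
    then have "a + 2 * b < - (14/5) * t" by (simp add: a_def b_def t_def)
    then have "(a + 2 * b)^2 < (-(14/5) * t)^2" using ab by (intro power_strict_mono) auto
    moreover have "(a + 2 * b)^2 - 8 * (a * b) = (a - 2 * b)^2" by (simp add: power2_eq_square algebra_simps)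
    moreover have "t^2 \<le> a * b" using CS by (simp add: a_def b_def t_def)
    ultimately show False by (simp add: power2_eq_square) (smt (verit) zero_le_square)
  qed
  then show ?thesis
    using gram_perturbation_expansion[OF symM] cross by (simp add: c_def M_def N_def)
qed

section \<open>The smallest singular value\<close>

lemma column_matrix_mult: "column j ((A::real^'k^'m) ** B) = A *v column j B"
  by (simp add: vec_eq_iff column_def matrix_matrix_mult_def matrix_vector_mult_def)

lemma inner_symmetric_matrix_vector:
  assumes "transpose (S::real^'n^'n) = S"
  shows "(S *v v) \<bullet> w = v \<bullet> (S *v w)"
  by (metis assms dot_lmul_matrix transpose_matrix_vector)

lemma finite_eigenvalues_symmetric:
  fixes S :: "real^'n^'n"
  assumes sym: "transpose S = S"
  shows "finite {c. \<exists>v. v \<noteq> 0 \<and> S *v v = c *\<^sub>R v}" (is "finite ?E")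
proof -
  define ev where "ev c = (SOME v. v \<noteq> 0 \<and> S *v v = c *\<^sub>R v)" for c
  have ev: "ev c \<noteq> 0 \<and> S *v ev c = c *\<^sub>R ev c" if "c \<in> ?E" for c
    unfolding ev_def by (rule someI_ex) (use that in simp)
  have orth: "ev c \<bullet> ev d = 0" if "c \<in> ?E" "d \<in> ?E" "c \<noteq> d" for c d
  proof -
    have "c * (ev c \<bullet> ev d) = d * (ev c \<bullet> ev d)"
      using inner_symmetric_matrix_vector[OF sym, of "ev c" "ev d"] ev[OF that(1)] ev[OF that(2)]
      by simp
    then show ?thesis using that(3) by simp
  qed
  have "inj_on ev ?E"
  proof (rule inj_onI, rule ccontr)
    fix c d assume cd: "c \<in> ?E" "d \<in> ?E" "ev c = ev d" "c \<noteq> d"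
    then have "ev c \<bullet> ev c = 0" using orth[of c d] by simp
    then show False using ev[OF cd(1)] by simp
  qed
  have "pairwise orthogonal (ev ` ?E)"
  proof (rule pairwiseI)
    fix x y assume "x \<in> ev ` ?E" "y \<in> ev ` ?E" "x \<noteq> y"
    then obtain c d where "c \<in> ?E" "d \<in> ?E" "c \<noteq> d" "x = ev c" "y = ev d" by blast
    then show "orthogonal x y" using orth unfolding orthogonal_def by blast
  qed
  moreover have "0 \<notin> ev ` ?E"
  proof
    assume "0 \<in> ev ` ?E"
    then obtain c where "0 = ev c" "c \<in> ?E" by (rule imageE)
    then show False using ev[of c] by simp
  qed
  ultimately have "independent (ev ` ?E)"
    by (intro pairwise_orthogonal_independent)
  then show ?thesis
    using finiteI_independent finite_imageD \<open>inj_on ev ?E\<close> by blast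
qed

lemma eigenvector_if_min_gain:
  fixes U :: "real^'r^'d"
  assumes v0: "norm v0 = 1" and min: "\<And>v. (norm (U *v v0))^2 * (norm v)^2 \<le> (norm (U *v v))^2"
  shows "(transpose U ** U) *v v0 = (norm (U *v v0))^2 *\<^sub>R v0"
proof -
  define f where "f v = (norm (U *v v))^2" for v :: "real^'r"
  \<comment> \<open>first-order condition of the minimisation along \<open>v0 + t w\<close>\<close>
  have "w \<bullet> ((transpose U ** U) *v v0 - f v0 *\<^sub>R v0) = 0" for w
  proof -
    define z where "z = (transpose U ** U) *v v0 - f v0 *\<^sub>R v0"
    have "t * (-2 * (w \<bullet> z)) \<le> t^2 * (f w - f v0 * (norm w)^2)" for t
    proof -
      have "f v0 * (norm (v0 + t *\<^sub>R w))^2 \<le> f (v0 + t *\<^sub>R w)" unfolding f_def by (rule min)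
      moreover have "(norm (v0 + t *\<^sub>R w))^2 = 1 + 2 * t * (v0 \<bullet> w) + t^2 * (norm w)^2"
        using v0 unfolding power2_norm_eq_inner
        by (simp add: norm_eq_1 inner_commute[of w v0] power2_eq_square algebra_simps)
      moreover have "f (v0 + t *\<^sub>R w) = f v0 + 2 * t * (w \<bullet> z + f v0 * (v0 \<bullet> w)) + t^2 * f w"
        unfolding f_def power2_norm_eq_inner z_def
        by (simp add: inner_gram_matrix inner_commute[of "U *v w" "U *v v0"]
            inner_commute[of w v0] power2_eq_square algebra_simps)
      ultimately show ?thesis by (simp add: algebra_simps)
    qed
    then have "-2 * (w \<bullet> z) = 0" by (rule linear_le_quadratic_imp_zero)
    then show ?thesis by (simp add: z_def)
  qed
  then show ?thesis
    unfolding f_def by (metis eq_iff_diff_eq_0 inner_eq_zero_iff)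
qed

lemma gram_min_eigenpair:
  fixes U :: "real^'r^'d"
  obtains v0 where "norm v0 = 1"
    and "(transpose U ** U) *v v0 = (norm (U *v v0))^2 *\<^sub>R v0"
    and "\<And>v. (norm (U *v v0))^2 * (norm v)^2 \<le> (norm (U *v v))^2"
proof -
  define f where "f v = (norm (U *v v))^2" for v :: "real^'r"
  have "\<exists>v0\<in>sphere 0 1. \<forall>v\<in>sphere 0 1. f v0 \<le> f v"
  proof (rule continuous_attains_inf)
    obtain k :: 'r where True by simp
    have "axis k 1 \<in> sphere (0::real^'r) 1" by simp
    then show "sphere (0::real^'r) 1 \<noteq> {}" by blast
    show "continuous_on (sphere 0 1) f"
      unfolding f_def matrix_vector_mult_def by (intro continuous_intros)
  qed simp
  then obtain v0 where v0: "norm v0 = 1" and vmin: "\<And>v. norm v = 1 \<Longrightarrow> f v0 \<le> f v" by auto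
  have min: "f v0 * (norm v)^2 \<le> f v" for v
  proof (cases "v = 0")
    case False
    have "f v0 \<le> f (v /\<^sub>R norm v)" using False by (intro vmin) simp
    also have "f (v /\<^sub>R norm v) = f v / (norm v)^2"
      using False by (simp add: f_def matrix_vector_mult_scaleR field_simps)
    finally show ?thesis using False by (simp add: field_simps)
  qed (simp add: f_def)
  then show thesis
    using v0 eigenvector_if_min_gain[OF v0] by (intro that) (auto simp: f_def)
qed

lemma sigma_r_min_gain:
  fixes U :: "real^'r^'d"
  obtains v0 where "norm v0 = 1" "sigma_r U = norm (U *v v0)"
    and "\<And>v. (sigma_r U)^2 * (norm v)^2 \<le> (norm (U *v v))^2"
proof -
  obtain v0 where v0: "norm v0 = 1"
    and eig: "(transpose U ** U) *v v0 = (norm (U *v v0))^2 *\<^sub>R v0"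
    and min: "\<And>v. (norm (U *v v0))^2 * (norm v)^2 \<le> (norm (U *v v))^2"
    using gram_min_eigenpair[of U] by blast
  define E where "E = {c. \<exists>v. v \<noteq> 0 \<and> (transpose U ** U) *v v = c *\<^sub>R v}"
  have "finite E"
    unfolding E_def by (rule finite_eigenvalues_symmetric) (simp add: matrix_transpose_mul)
  moreover have "(norm (U *v v0))^2 \<in> E"
    unfolding E_def using v0 eig by (intro CollectI exI[of _ v0]) auto
  moreover have "(norm (U *v v0))^2 \<le> c" if "c \<in> E" for c
  proof -
    obtain v where v: "v \<noteq> 0" "(transpose U ** U) *v v = c *\<^sub>R v"
      using \<open>c \<in> E\<close> unfolding E_def by blast
    have "c * (norm v)^2 = (norm (U *v v))^2"
      using inner_gram_matrix[of v U v] by (simp add: v power2_norm_eq_inner)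
    then have "(norm (U *v v0))^2 * (norm v)^2 \<le> c * (norm v)^2" using min[of v] by simp
    moreover have "(norm v)^2 > 0" using v by simp
    ultimately show ?thesis by (simp add: mult_le_cancel_right_pos)
  qed
  ultimately have "Min E = (norm (U *v v0))^2" by (intro Min_eqI)
  then have "sigma_r U = norm (U *v v0)" by (simp add: sigma_r_def E_def[symmetric])
  with v0 min show thesis by (intro that) auto
qed

lemma sigma_r_pos:
  fixes U :: "real^'r^'d"
  assumes "rank U = CARD('r)"
  shows "sigma_r U > 0"
proof -
  obtain v0 where "norm v0 = 1" "sigma_r U = norm (U *v v0)"
    using sigma_r_min_gain[of U] by blast
  moreover have "inj ((*v) U)" using assms full_rank_injective by blast
  ultimately show ?thesis by (metis injD matrix_vector_mult_0_right norm_zero zero_less_norm_iff zero_neq_one)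
qed

lemma sigma_r_norm_matrix_le:
  fixes U :: "real^'r^'d" and B :: "real^'k^'r"
  shows "(sigma_r U)^2 * (norm B)^2 \<le> (norm (U ** B))^2"
proof -
  have gain: "(sigma_r U)^2 * (norm v)^2 \<le> (norm (U *v v))^2" for v
    by (metis sigma_r_min_gain)
  show ?thesis
    unfolding norm_squared_columns[of B] norm_squared_columns[of "U ** B"] column_matrix_mult
    by (simp add: sum_distrib_left sum_mono gain)
qed

section \<open>From the Gram matrix to the factor\<close>

lemma procR_maximises_inner:
  fixes Uh Us :: "real^'r^'d"
  defines "C \<equiv> transpose (Us ** procR Uh Us) ** Uh"
  assumes G: "orthogonal_matrix G"
  shows "C \<bullet> G \<le> trace C"
proof -
  define X where "X = Us ** procR Uh Us"
  have "norm (Uh - X) \<le> norm (Uh - X ** G)"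
    using procR(2)[OF orthogonal_matrix_mul[OF procR(1) G]] by (simp add: X_def matrix_mul_assoc)
  then have "(norm (Uh - X))^2 \<le> (norm (Uh - X ** G))^2" by (intro power_mono) auto
  moreover have "(norm (Uh - Y))^2 = (norm Uh)^2 - 2 * (Uh \<bullet> Y) + (norm Y)^2" for Y :: "real^'r^'d"
    by (simp add: power2_norm_eq_inner inner_diff_left inner_diff_right inner_commute)
  ultimately have "Uh \<bullet> (X ** G) \<le> Uh \<bullet> X"
    by (simp add: norm_matrix_orthogonal_matrix[OF G])
  then show ?thesis
    by (simp add: C_def X_def[symmetric] inner_eq_trace matrix_transpose_mul matrix_mul_assoc
        trace_transpose[of "transpose X ** Uh", symmetric])
qed

lemma procrustes_error_le_gram_error:
  fixes Uh Us :: "real^'r^'d"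
  shows "(4/5) * (sigma_r Us)^2 * (norm (Uh - Us ** procR Uh Us))^2
    \<le> (norm (Uh ** transpose Uh - Us ** transpose Us))^2"
proof -
  define R where "R = procR Uh Us"
  define X where "X = Us ** R"
  define H where "H = Uh - X"
  define C where "C = transpose X ** Uh"
  have max: "\<And>G. orthogonal_matrix G \<Longrightarrow> C \<bullet> G \<le> trace C"
    unfolding C_def X_def R_def by (rule procR_maximises_inner)
  have "transpose X ** H = C - transpose X ** X"
    by (simp add: C_def H_def matrix_diff_ldistrib)
  then have symM: "transpose (transpose X ** H) = transpose X ** H"
    by (simp add: transpose_diff matrix_transpose_mul symmetric_if_identity_maximises_inner[OF max])
  have psd: "0 \<le> v \<bullet> ((transpose X ** (X + H)) *v v)" for v
    using psd_if_identity_maximises_inner[OF max] by (simp add: C_def H_def)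
  have "X ** transpose X = Us ** transpose Us"
    using procR(1)[of Uh Us]
    by (simp add: X_def R_def orthogonal_matrix_def matrix_transpose_mul matrix_mul_assoc
        flip: matrix_mul_assoc[of Us "procR Uh Us"])
  then have gram: "Uh ** transpose Uh - Us ** transpose Us
      = X ** transpose H + H ** transpose X + H ** transpose H"
    by (simp add: H_def transpose_diff matrix_diff_ldistrib matrix_diff_rdistrib algebra_simps)
  have "norm (R ** transpose H) = norm H"
    using norm_matrix_orthogonal_matrix[of "transpose R" H] procR(1)[of Uh Us]
    by (metis R_def matrix_transpose_mul norm_transpose orthogonal_matrix_transpose transpose_transpose)
  then have "(sigma_r Us)^2 * (norm H)^2 \<le> (norm (X ** transpose H))^2"
    using sigma_r_norm_matrix_le[of Us "R ** transpose H"] by (simp add: X_def matrix_mul_assoc)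
  also have "(4/5) * \<dots> \<le> (norm (Uh ** transpose Uh - Us ** transpose Us))^2"
    unfolding gram by (rule gram_perturbation_lower_bound[OF symM psd])
  finally show ?thesis by (simp add: H_def X_def R_def mult.assoc)
qed

lemma norm21_triangle: "norm21 (A + B) \<le> norm21 A + norm21 B"
  unfolding norm21_def by (simp add: sum.distrib[symmetric] sum_mono norm_triangle_ineq)

lemma norm21_matrix_orthogonal_matrix:
  fixes A :: "real^'n^'m"
  assumes "orthogonal_matrix G"
  shows "norm21 (A ** G) = norm21 A"
  unfolding norm21_def row_matrix_mult using assms by (simp add: norm_vector_orthogonal_matrix)

lemma norm21_le_sqrt_card_norm:
  fixes A :: "real^'c^'r"
  shows "norm21 A \<le> sqrt (real CARD('r)) * norm A"
proof -
  have "(\<Sum>k\<in>UNIV. 1 * norm (A$k))^2 \<le> (\<Sum>k\<in>(UNIV::'r set). 1^2) * (\<Sum>k\<in>UNIV. (norm (A$k))^2)"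
    by (rule Cauchy_Schwarz_ineq_sum)
  then have "(norm21 A)^2 \<le> real CARD('r) * (norm A)^2"
    by (simp add: norm21_def norm_squared_rows)
  then have "(norm21 A)^2 \<le> (sqrt (real CARD('r)) * norm A)^2"
    by (simp add: power_mult_distrib)
  then show ?thesis by (rule power2_le_imp_le) simp
qed

lemma ell_le_triangle:
  fixes Uh Up Ug :: "real^'r^'d"
  shows "ell Uh Ug \<le> norm21 (Ug - Up) + norm21 (Up ** (procR Uh Up - procR Uh Ug))
           + norm21 (Uh - Up ** procR Uh Up)"
proof -
  define R1 R2 where "R1 = procR Uh Up" and "R2 = procR Uh Ug"
  have "Uh - Ug ** R2 = (Uh - Up ** R1) + Up ** (R1 - R2) + (Up - Ug) ** R2"
    by (simp add: matrix_diff_ldistrib matrix_diff_rdistrib)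
  then have "ell Uh Ug \<le> norm21 ((Uh - Up ** R1) + Up ** (R1 - R2)) + norm21 ((Up - Ug) ** R2)"
    unfolding ell_def R2_def[symmetric] by (simp only: norm21_triangle)
  also have "\<dots> \<le> norm21 (Uh - Up ** R1) + norm21 (Up ** (R1 - R2)) + norm21 ((Up - Ug) ** R2)"
    by (simp add: norm21_triangle)
  also have "norm21 ((Up - Ug) ** R2) = norm21 (Ug - Up)"
    using norm21_matrix_orthogonal_matrix[OF procR(1), of "Up - Ug"]
    by (simp add: R2_def norm21_def norm_minus_commute)
  finally show ?thesis by (simp add: R1_def R2_def)
qed

lemma ell_le_gram_error:
  fixes Uh Up Ug :: "real^'r^'d"
  assumes "rank Up = CARD('r)"
  shows "ell Uh Ug \<le> norm21 (Ug - Up) + norm21 (Up ** (procR Uh Up - procR Uh Ug))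
    + sqrt (5 * real CARD('d)) / (2 * sigma_r Up) * norm (Uh ** transpose Uh - Up ** transpose Up)"
proof -
  define H D where "H = Uh - Up ** procR Uh Up" and "D = Uh ** transpose Uh - Up ** transpose Up"
  have \<sigma>: "sigma_r Up > 0" using assms by (rule sigma_r_pos)
  have "(sqrt 5 / 2 * norm D)^2 = 5/4 * (norm D)^2"
    by (simp add: power_mult_distrib power_divide)
  then have "(sigma_r Up * norm H)^2 \<le> (sqrt 5 / 2 * norm D)^2"
    using procrustes_error_le_gram_error[where Uh = Uh and Us = Up]
    by (simp add: H_def D_def power_mult_distrib)
  then have "sigma_r Up * norm H \<le> sqrt 5 / 2 * norm D"
    by (rule power2_le_imp_le) simp
  then have "norm H \<le> sqrt 5 / (2 * sigma_r Up) * norm D"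
    using \<sigma> by (simp add: field_simps)
  then have "norm21 H \<le> sqrt (real CARD('d)) * (sqrt 5 / (2 * sigma_r Up) * norm D)"
    using norm21_le_sqrt_card_norm[of H] by (meson mult_left_mono order_trans real_sqrt_ge_zero of_nat_0_le_iff)
  also have "\<dots> = sqrt (5 * real CARD('d)) / (2 * sigma_r Up) * norm D"
    by (simp add: real_sqrt_mult)
  finally show ?thesis
    using ell_le_triangle[of Uh Ug Up] by (simp add: H_def D_def)
qed

section \<open>Covering numbers\<close>

locale equivalent_norm =
  fixes N :: "'a::euclidean_space \<Rightarrow> real" and c1 c2 :: real
  assumes triangle: "\<And>x y. N (x + y) \<le> N x + N y"
    and homogeneous: "\<And>c x. N (c *\<^sub>R x) = \<bar>c\<bar> * N x"
    and lower: "\<And>x. c1 * norm x \<le> N x"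
    and upper: "\<And>x. N x \<le> c2 * norm x"
    and c1_pos: "c1 > 0"
begin

lemma minus_commute: "N (x - y) = N (y - x)"
  using homogeneous[of "-1" "x - y"] by simp

lemma c2_pos: "c2 > 0"
proof -
  obtain b :: 'a where "b \<in> Basis" using nonempty_Basis by blast
  then have "norm b = 1" by simp
  then show ?thesis using lower[of b] upper[of b] c1_pos by simp
qed

lemma lipschitz: "\<bar>N x - N y\<bar> \<le> c2 * dist x y"
proof -
  have "N x \<le> N y + N (x - y)" using triangle[of y "x - y"] by simp
  moreover have "N y \<le> N x + N (y - x)" using triangle[of x "y - x"] by simp
  moreover have "N (x - y) \<le> c2 * dist x y" using upper[of "x - y"] by (simp add: dist_norm)
  ultimately show ?thesis using minus_commute[of x y] by linarith
qed

lemma continuous: "continuous_on UNIV N"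
proof (rule lipschitz_on_continuous_on)
  show "c2-lipschitz_on UNIV N"
    by (rule lipschitz_onI) (use lipschitz c2_pos in \<open>auto simp: dist_real_def\<close>)
qed

lemma open_ball: "open {z. N (z - p) < r}"
proof -
  have "continuous_on UNIV (\<lambda>z. N (z - p))"
    by (intro continuous_on_compose2[OF continuous] continuous_intros) auto
  then show ?thesis by (simp add: open_Collect_less)
qed

lemma bounded_ball: "bounded {z. N (z - p) < r}"
proof -
  have "norm z \<le> norm p + r / c1" if "N (z - p) < r" for z
  proof -
    have "c1 * norm (z - p) \<le> N (z - p)" by (rule lower)
    then have "norm (z - p) \<le> r / c1" using that c1_pos by (simp add: field_simps)
    moreover have "norm z \<le> norm p + norm (z - p)" by (metis norm_triangle_sub)
    ultimately show ?thesis by linarith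
  qed
  then show ?thesis unfolding bounded_iff by blast
qed

lemma lmeasurable_ball: "{z. N (z - p) < r} \<in> lmeasurable"
  by (rule lmeasurable_open[OF bounded_ball open_ball])

definition unit_ball where "unit_ball = {z. N z < 1}"

lemma lmeasurable_unit_ball: "unit_ball \<in> lmeasurable"
  using lmeasurable_ball[of 0 1] by (simp add: unit_ball_def)

lemma measure_unit_ball_pos: "measure lebesgue unit_ball > 0"
proof -
  have sub: "ball 0 (1/c2) \<subseteq> unit_ball"
  proof
    fix z :: 'a assume "z \<in> ball 0 (1/c2)"
    then have "norm z < 1/c2" by simp
    then have "c2 * norm z < 1" using c2_pos by (simp add: field_simps)
    then show "z \<in> unit_ball" using upper[of z] by (simp add: unit_ball_def)
  qed
  have "measure lebesgue (ball (0::'a) (1/c2)) = measure lborel (ball (0::'a) (1/c2))"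
    by (rule measure_completion) simp
  moreover have "measure lborel (ball (0::'a) (1/c2)) > 0" using c2_pos by (intro content_ball_pos) simp
  moreover have "measure lebesgue (ball (0::'a) (1/c2)) \<le> measure lebesgue unit_ball"
    by (intro measure_mono_fmeasurable sub lmeasurable_unit_ball) auto
  ultimately show ?thesis by linarith
qed

lemma ball_eq_image:
  assumes "r > 0"
  shows "{z. N (z - p) < r} = (\<lambda>x. r *\<^sub>R x + p) ` unit_ball"
proof (intro set_eqI iffI)
  fix z assume "z \<in> {z. N (z - p) < r}"
  then have lt: "N (z - p) < r" by simp
  have eq: "N ((1/r) *\<^sub>R (z - p)) = N (z - p) / r" using assms homogeneous[of "1/r" "z - p"] by simp
  have "N ((1/r) *\<^sub>R (z - p)) < 1" unfolding eq using lt assms by (simp add: divide_less_eq)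
  then have "(1/r) *\<^sub>R (z - p) \<in> unit_ball" unfolding unit_ball_def by simp
  moreover have "z = r *\<^sub>R ((1/r) *\<^sub>R (z - p)) + p" using assms by simp
  ultimately show "z \<in> (\<lambda>x. r *\<^sub>R x + p) ` unit_ball" by (rule rev_image_eqI)
next
  fix z assume "z \<in> (\<lambda>x. r *\<^sub>R x + p) ` unit_ball"
  then obtain x where "N x < 1" "z = r *\<^sub>R x + p" by (auto simp: unit_ball_def)
  then show "z \<in> {z. N (z - p) < r}" using assms by (simp add: homogeneous)
qed

lemma measure_ball:
  assumes "r > 0"
  shows "measure lebesgue {z. N (z - p) < r} = r ^ DIM('a) * measure lebesgue unit_ball"
  unfolding ball_eq_image[OF assms] measure_lebesgue_affine using assms by simp

lemma disjoint_half_balls: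
  assumes "\<And>x y. x \<in> P \<Longrightarrow> y \<in> P \<Longrightarrow> x \<noteq> y \<Longrightarrow> \<epsilon> < N (x - y)"
  shows "disjoint_family_on (\<lambda>p. {z. N (z - p) < \<epsilon>/2}) P"
  unfolding disjoint_family_on_def
proof (intro ballI impI)
  fix p q assume pq: "p \<in> P" "q \<in> P" "p \<noteq> q"
  have tri: "N (p - q) \<le> N (z - p) + N (z - q)" for z
    using triangle[of "p - z" "z - q"] minus_commute[of p z] by simp
  show "{z. N (z - p) < \<epsilon>/2} \<inter> {z. N (z - q) < \<epsilon>/2} = {}"
  proof (rule equals0I)
    fix z assume "z \<in> {z. N (z - p) < \<epsilon>/2} \<inter> {z. N (z - q) < \<epsilon>/2}"
    then show False using tri[of z] assms[OF pq] by simp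
  qed
qed

text \<open>Volume comparison: the balls of radius \<open>\<epsilon>/2\<close> about the points of an \<open>\<epsilon>\<close>-separated subset of
  the unit ball are disjoint and lie in the ball of radius \<open>1 + \<epsilon>/2\<close>.\<close>

lemma card_separated_le:
  assumes e: "\<epsilon> > 0"
    and P: "finite P" "\<And>x. x \<in> P \<Longrightarrow> N x \<le> 1"
      "\<And>x y. x \<in> P \<Longrightarrow> y \<in> P \<Longrightarrow> x \<noteq> y \<Longrightarrow> \<epsilon> < N (x - y)"
  shows "real (card P) \<le> (1 + 2/\<epsilon>)^DIM('a)"
proof -
  define B where "B p = {z. N (z - p) < \<epsilon>/2}" for p
  define m0 where "m0 = measure lebesgue unit_ball"
  have m0: "m0 > 0" using measure_unit_ball_pos by (simp add: m0_def)
  have Bl: "B p \<in> lmeasurable" for p unfolding B_def by (rule lmeasurable_ball)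
  have mB: "measure lebesgue (B p) = (\<epsilon>/2)^DIM('a) * m0" for p
    unfolding B_def m0_def by (rule measure_ball) (use e in simp)
  have disj: "disjoint_family_on B P"
    unfolding B_def using P(3) by (rule disjoint_half_balls)
  have sub: "(\<Union>p\<in>P. B p) \<subseteq> {z. N (z - 0) < 1 + \<epsilon>/2}"
  proof clarify
    fix p z assume "p \<in> P" "z \<in> B p"
    then have "N (z - p) < \<epsilon>/2" "N p \<le> 1" using P(2) by (auto simp: B_def)
    moreover have "N z \<le> N (z - p) + N p" using triangle[of "z - p" p] by simp
    ultimately show "N (z - 0) < 1 + \<epsilon>/2" by simp
  qed
  have "(\<Sum>p\<in>P. measure lebesgue (B p)) = measure lebesgue (\<Union>p\<in>P. B p)"
  proof (rule measure_finite_Union[symmetric, OF P(1) _ disj])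
    show "B ` P \<subseteq> sets lebesgue" using Bl by blast
    show "emeasure lebesgue (B p) \<noteq> \<infinity>" for p using fmeasurableD2[OF Bl] by simp
  qed
  also have "\<dots> \<le> measure lebesgue {z. N (z - 0) < 1 + \<epsilon>/2}"
    using Bl by (intro measure_mono_fmeasurable sub lmeasurable_ball sets.finite_UN P(1)) (auto simp: fmeasurable_def)
  also have "\<dots> = (1 + \<epsilon>/2)^DIM('a) * m0"
    using e by (subst measure_ball) (auto simp: m0_def add_pos_pos)
  finally have "real (card P) * ((\<epsilon>/2)^DIM('a) * m0) \<le> (1 + \<epsilon>/2)^DIM('a) * m0"
    by (simp add: mB)
  then have "real (card P) * (\<epsilon>/2)^DIM('a) \<le> (1 + \<epsilon>/2)^DIM('a)"
    using m0 by (simp add: mult.assoc[symmetric])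
  then have "real (card P) \<le> (1 + \<epsilon>/2)^DIM('a) / (\<epsilon>/2)^DIM('a)"
    using e by (subst pos_le_divide_eq) auto
  also have "\<dots> = ((1 + \<epsilon>/2) / (\<epsilon>/2))^DIM('a)"
    by (rule power_divide[symmetric])
  also have "(1 + \<epsilon>/2) / (\<epsilon>/2) = 1 + 2/\<epsilon>"
    using e by (simp add: field_simps)
  finally show ?thesis .
qed

text \<open>A maximal \<open>\<epsilon>\<close>-separated subset is an \<open>\<epsilon>\<close>-net.\<close>

lemma exists_net:
  assumes e: "\<epsilon> > 0" and T: "\<And>x. x \<in> T \<Longrightarrow> N x \<le> 1"
  shows "\<exists>F. finite F \<and> F \<subseteq> T \<and> real (card F) \<le> (1 + 2/\<epsilon>)^DIM('a) \<and>
           (\<forall>x\<in>T. \<exists>y\<in>F. N (x - y) \<le> \<epsilon>)"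
proof -
  define good where "good P \<longleftrightarrow> finite P \<and> P \<subseteq> T \<and>
      (\<forall>x\<in>P. \<forall>y\<in>P. x \<noteq> y \<longrightarrow> \<epsilon> < N (x - y))" for P
  have bnd: "card P < nat \<lceil>(1 + 2/\<epsilon>)^DIM('a)\<rceil> + 1" if "good P" for P
  proof -
    have "real (card P) \<le> (1 + 2/\<epsilon>)^DIM('a)"
      using that T unfolding good_def by (intro card_separated_le[OF e]) auto
    then show ?thesis by linarith
  qed
  have "good {}" by (simp add: good_def)
  from ex_has_greatest_nat[of good "{}" card, OF this] bnd
  obtain P where P: "good P" and max: "\<And>Q. good Q \<Longrightarrow> card Q \<le> card P" by blast
  show ?thesis
  proof (intro exI conjI)
    show "finite P" "P \<subseteq> T" using P by (auto simp: good_def)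
    show "real (card P) \<le> (1 + 2/\<epsilon>)^DIM('a)"
      using P T unfolding good_def by (intro card_separated_le[OF e]) auto
    show "\<forall>x\<in>T. \<exists>y\<in>P. N (x - y) \<le> \<epsilon>"
    proof (rule ccontr)
      assume "\<not> ?thesis"
      then obtain x where x: "x \<in> T" "\<And>y. y \<in> P \<Longrightarrow> \<epsilon> < N (x - y)" by force
      have xP: "x \<notin> P"
      proof
        assume "x \<in> P" then have "\<epsilon> < N (x - x)" by (rule x(2))
        then show False using e homogeneous[of 0 0] by simp
      qed
      have "good (insert x P)"
        using P x minus_commute unfolding good_def by auto
      then have "card (insert x P) \<le> card P" by (rule max)
      then show False using xP P by (simp add: good_def)
    qed
  qed
qed

end

section \<open>A net for matrices of bounded rank\<close>

lemma orthonormal_span_expansion: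
  fixes Bs :: "'a::euclidean_space set"
  assumes fin: "finite Bs" and po: "pairwise orthogonal Bs" and n1: "\<And>b. b \<in> Bs \<Longrightarrow> norm b = 1"
    and w: "w \<in> span Bs"
  shows "w = (\<Sum>b\<in>Bs. (b \<bullet> w) *\<^sub>R b)"
proof -
  define v where "v = w - (\<Sum>b\<in>Bs. (b \<bullet> w) *\<^sub>R b)"
  have vb: "v \<bullet> b' = 0" if "b' \<in> Bs" for b'
  proof -
    have "(\<Sum>b\<in>Bs. (b \<bullet> w) *\<^sub>R b) \<bullet> b' = (\<Sum>b\<in>Bs. (b \<bullet> w) * (b \<bullet> b'))"
      by (simp add: inner_sum_left)
    also have "\<dots> = (\<Sum>b\<in>Bs. if b = b' then b' \<bullet> w else 0)"
    proof (rule sum.cong[OF refl])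
      fix b assume "b \<in> Bs"
      show "(b \<bullet> w) * (b \<bullet> b') = (if b = b' then b' \<bullet> w else 0)"
      proof (cases "b = b'")
        case True then show ?thesis using n1[OF that] by (simp add: norm_eq_1)
      next
        case False then show ?thesis using po \<open>b \<in> Bs\<close> that
          by (auto simp: pairwise_def orthogonal_def)
      qed
    qed
    also have "\<dots> = b' \<bullet> w" using fin that by simp
    finally have "(\<Sum>b\<in>Bs. (b \<bullet> w) *\<^sub>R b) \<bullet> b' = b' \<bullet> w" .
    then show ?thesis unfolding v_def inner_diff_left by (simp add: inner_commute[of w b'])
  qed
  have "v \<in> span Bs" unfolding v_def
    by (intro span_diff w span_sum span_scale span_base) 
  then obtain u where "v = (\<Sum>b\<in>Bs. u b *\<^sub>R b)" using span_finite[OF fin] by blast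
  then have "v \<bullet> v = (\<Sum>b\<in>Bs. u b * (v \<bullet> b))" by (simp add: inner_sum_right)
  also have "\<dots> = 0" using vb by simp
  finally have "v = 0" by simp
  then show ?thesis by (simp add: v_def)
qed

lemma orthonormal_span_parseval:
  fixes Bs :: "'a::euclidean_space set"
  assumes fin: "finite Bs" and po: "pairwise orthogonal Bs" and n1: "\<And>b. b \<in> Bs \<Longrightarrow> norm b = 1"
    and w: "w \<in> span Bs"
  shows "(norm w)^2 = (\<Sum>b\<in>Bs. (b \<bullet> w)^2)"
proof -
  have "(norm w)^2 = w \<bullet> (\<Sum>b\<in>Bs. (b \<bullet> w) *\<^sub>R b)"
    using orthonormal_span_expansion[OF assms] by (simp add: power2_norm_eq_inner)
  also have "\<dots> = (\<Sum>b\<in>Bs. (b \<bullet> w)^2)"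
    by (simp add: inner_sum_right power2_eq_square inner_commute)
  finally show ?thesis .
qed

lemma orthonormal_set_as_columns:
  fixes Bs :: "('a::real_inner) set"
  assumes fin: "finite Bs" and card: "card Bs \<le> CARD('k)" and po: "pairwise orthogonal Bs"
    and n1: "\<And>b. b \<in> Bs \<Longrightarrow> norm b = 1"
  obtains q :: "'k::finite \<Rightarrow> 'a"
  where "\<And>c c'. q c \<bullet> q c' = (if c = c' \<and> q c \<noteq> 0 then 1 else 0)"
    and "\<And>h :: 'a \<Rightarrow> real. h 0 = 0 \<Longrightarrow> (\<Sum>c\<in>UNIV. h (q c)) = (\<Sum>b\<in>Bs. h b)"
proof -
  obtain g :: "'a \<Rightarrow> 'k" where g: "inj_on g Bs"
    using card card_le_inj[OF fin finite_class.finite_UNIV] by auto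
  define q where "q c = (if c \<in> g ` Bs then inv_into Bs g c else 0)" for c
  have qg: "q (g b) = b" if "b \<in> Bs" for b using that g by (simp add: q_def)
  have q0: "q c = 0" if "c \<notin> g ` Bs" for c using that by (simp add: q_def)
  have "0 \<notin> Bs" using n1 by force
  then have "q c \<noteq> 0 \<longleftrightarrow> c \<in> g ` Bs" for c
    using qg q0 by (metis image_iff)
  moreover have "q c \<bullet> q c' = (if c = c' then (if c \<in> g ` Bs then 1 else 0) else 0)" for c c'
  proof (cases "c \<in> g ` Bs \<and> c' \<in> g ` Bs")
    case True
    then obtain b b' where bb: "b \<in> Bs" "b' \<in> Bs" "c = g b" "c' = g b'" by blast
    then show ?thesis
      using n1[of b] po qg g by (auto simp: norm_eq_1 pairwise_def orthogonal_def inj_on_def)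
  qed (use q0 in auto)
  moreover have "(\<Sum>c\<in>UNIV. h (q c)) = (\<Sum>b\<in>Bs. h b)" if h0: "h 0 = 0" for h :: "'a \<Rightarrow> real"
  proof -
    have "(\<Sum>c\<in>UNIV. h (q c)) = (\<Sum>c\<in>g ` Bs. h (q c))"
      by (rule sum.mono_neutral_right) (auto simp: q0 h0)
    also have "\<dots> = (\<Sum>b\<in>Bs. h b)"
      by (simp add: sum.reindex[OF g] qg)
    finally show ?thesis .
  qed
  ultimately show thesis by (intro that[of q]) auto
qed

lemma norm_matrix_vector_le_orthonormal_columns:
  fixes q :: "'k::finite \<Rightarrow> real^'d"
  assumes q: "\<And>c c'. q c \<bullet> q c' = (if c = c' \<and> q c \<noteq> 0 then 1 else 0)"
  shows "norm ((\<chi> i c. q c $ i) *v x) \<le> norm x"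
proof -
  have "(\<chi> i c. q c $ i) *v x = (\<Sum>c\<in>UNIV. x $ c *\<^sub>R q c)"
    by (simp add: vec_eq_iff matrix_vector_mult_def mult.commute)
  then have "(norm ((\<chi> i c. q c $ i) *v x))^2 = (\<Sum>c\<in>UNIV. \<Sum>c'\<in>UNIV. x $ c * (x $ c' * (q c' \<bullet> q c)))"
    unfolding power2_norm_eq_inner by (simp add: inner_sum_left inner_sum_right sum_distrib_left)
  also have "\<dots> = (\<Sum>c\<in>UNIV. x $ c * x $ c * (if q c \<noteq> 0 then 1 else 0))"
  proof -
    have "x $ c * (x $ c' * (q c' \<bullet> q c))
        = (if c' = c then x $ c * x $ c * (if q c \<noteq> 0 then 1 else 0) else 0)" for c c'
      by (simp add: q)
    then show ?thesis by simp
  qed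
  also have "\<dots> \<le> (\<Sum>c\<in>UNIV. x $ c * x $ c)"
    by (intro sum_mono) auto
  also have "\<dots> = (norm x)^2" by (simp add: power2_norm_eq_inner inner_vec_def)
  finally show ?thesis by (simp add: power2_le_iff_abs_le)
qed

lemma low_rank_factorization:
  fixes Z :: "real^'d^'d"
  assumes rk: "rank Z \<le> CARD('k)"
  obtains Q :: "real^'k^'d" and B :: "real^'d^'k"
  where "Z = Q ** B" "\<And>x. norm (Q *v x) \<le> norm x" "norm B = norm Z"
proof -
  let ?W = "span (columns Z)"
  obtain Bs where Bs: "pairwise orthogonal Bs" "\<And>x. x \<in> Bs \<Longrightarrow> norm x = 1"
      "independent Bs" "card Bs = dim ?W" "span Bs = ?W"
    using orthonormal_basis_subspace[of ?W] by (metis subspace_span)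
  have fin: "finite Bs" using Bs(3) by (rule finiteI_independent)
  have "card Bs = rank Z" by (metis Bs(4) column_rank_def dim_span)
  then obtain q :: "'k \<Rightarrow> real^'d"
    where q: "\<And>c c'. q c \<bullet> q c' = (if c = c' \<and> q c \<noteq> 0 then 1 else 0)"
      and sumq: "\<And>h :: real^'d \<Rightarrow> real. h 0 = 0 \<Longrightarrow> (\<Sum>c\<in>UNIV. h (q c)) = (\<Sum>b\<in>Bs. h b)"
    using orthonormal_set_as_columns[OF fin _ Bs(1,2)] rk by auto
  define Q :: "real^'k^'d" where "Q = (\<chi> i c. q c $ i)"
  define B :: "real^'d^'k" where "B = (\<chi> c j. q c \<bullet> column j Z)"
  have colW: "column j Z \<in> span Bs" for j
    using Bs(5) by (auto simp: columns_def intro: span_base)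
  have "(Q ** B) $ i $ j = Z $ i $ j" for i j
  proof -
    have "(Q ** B) $ i $ j = (\<Sum>c\<in>UNIV. ((q c \<bullet> column j Z) *\<^sub>R q c) $ i)"
      by (simp add: Q_def B_def matrix_matrix_mult_def mult.commute)
    also have "\<dots> = (\<Sum>b\<in>Bs. (b \<bullet> column j Z) *\<^sub>R b) $ i"
      by (subst sumq) simp_all
    also have "\<dots> = Z $ i $ j"
      using orthonormal_span_expansion[OF fin Bs(1,2) colW[of j]] by (simp add: column_def)
    finally show ?thesis .
  qed
  moreover have "(norm B)^2 = (norm Z)^2"
  proof -
    have "(norm B)^2 = (\<Sum>j\<in>UNIV. \<Sum>c\<in>UNIV. (q c \<bullet> column j Z)^2)"
      unfolding norm_squared_columns power2_norm_eq_inner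
      by (simp add: inner_vec_def column_def B_def power2_eq_square)
    also have "\<dots> = (\<Sum>j\<in>UNIV. \<Sum>b\<in>Bs. (b \<bullet> column j Z)^2)"
      by (intro sum.cong refl sumq) simp
    also have "\<dots> = (\<Sum>j\<in>UNIV. (norm (column j Z))^2)"
      using orthonormal_span_parseval[OF fin Bs(1,2) colW] by simp
    finally show ?thesis by (simp add: norm_squared_columns)
  qed
  ultimately show thesis
    using norm_matrix_vector_le_orthonormal_columns[OF q] by (intro that[of Q B]) (simp_all add: vec_eq_iff Q_def)
qed

abbreviation matrix_onorm :: "real^'k^'d \<Rightarrow> real" where
  "matrix_onorm Q \<equiv> onorm ((*v) Q)"

lemma matrix_onorm_nonneg: "matrix_onorm Q \<ge> 0"
  by (rule onorm_pos_le[OF matrix_vector_mul_bounded_linear])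

lemma norm_matrix_mult_le_onorm:
  fixes Q :: "real^'k^'d" and B :: "real^'n^'k"
  shows "norm (Q ** B) \<le> matrix_onorm Q * norm B"
proof -
  have "(norm (Q ** B))^2 = (\<Sum>j\<in>UNIV. (norm (Q *v column j B))^2)"
    by (simp add: norm_squared_columns column_matrix_mult)
  also have "\<dots> \<le> (\<Sum>j\<in>UNIV. (matrix_onorm Q * norm (column j B))^2)"
    by (intro sum_mono power_mono onorm[OF matrix_vector_mul_bounded_linear]) auto
  also have "\<dots> = (matrix_onorm Q * norm B)^2"
    by (simp add: power_mult_distrib sum_distrib_left norm_squared_columns[of B])
  finally show ?thesis
    using matrix_onorm_nonneg[of Q] by (simp add: power2_le_iff_abs_le)
qed

lemma norm_matrix_vector_le:
  fixes Q :: "real^'k^'d"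
  shows "norm (Q *v x) \<le> norm Q * norm x"
proof -
  have "(norm (Q *v x))^2 = (\<Sum>i\<in>UNIV. (Q$i \<bullet> x)^2)"
    unfolding power2_norm_eq_inner by (simp add: inner_vec_def matrix_vector_mul_component power2_eq_square)
  also have "\<dots> \<le> (\<Sum>i\<in>UNIV. (norm (Q$i) * norm x)^2)"
    by (intro sum_mono) (metis Cauchy_Schwarz_ineq2 abs_ge_zero power2_abs power_mono)
  also have "\<dots> = (norm Q * norm x)^2"
    by (simp add: power_mult_distrib sum_distrib_right norm_squared_rows[of Q])
  finally show ?thesis by (simp add: power2_le_iff_abs_le)
qed

lemma matrix_onorm_le_norm: "matrix_onorm (Q::real^'k^'d) \<le> norm Q"
  by (rule onorm_le) (rule norm_matrix_vector_le)

lemma norm_le_card_matrix_onorm: "norm (Q::real^'k^'d) \<le> real CARD('k) * matrix_onorm Q"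
proof -
  have "(norm Q)^2 \<le> (\<Sum>j\<in>(UNIV::'k set). (matrix_onorm Q)^2)"
    unfolding norm_squared_columns by (intro sum_mono power_mono norm_column_le_onorm) simp
  also have "\<dots> = real CARD('k) * (matrix_onorm Q)^2" by simp
  also have "\<dots> \<le> (real CARD('k))^2 * (matrix_onorm Q)^2"
    by (intro mult_right_mono) (simp_all add: power2_eq_square)
  also have "\<dots> = (real CARD('k) * matrix_onorm Q)^2" by (simp add: power_mult_distrib)
  finally show ?thesis
    using matrix_onorm_nonneg[of Q] by (simp add: power2_le_iff_abs_le)
qed

interpretation matrix_onorm: equivalent_norm "matrix_onorm :: real^'k^'d \<Rightarrow> real" "1 / real CARD('k)" 1
proof
  fix x y :: "real^'k^'d"
  have "(*v) (x + y) = (\<lambda>v. x *v v + y *v v)"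
    by (simp add: fun_eq_iff matrix_vector_mult_add_rdistrib)
  then show "matrix_onorm (x + y) \<le> matrix_onorm x + matrix_onorm y"
    by (simp add: onorm_triangle)
next
  fix c and x :: "real^'k^'d"
  have "(*v) (c *\<^sub>R x) = (\<lambda>v. c *\<^sub>R (x *v v))"
    by (simp add: fun_eq_iff scaleR_matrix_vector_assoc)
  then show "matrix_onorm (c *\<^sub>R x) = \<bar>c\<bar> * matrix_onorm x"
    by (simp add: onorm_scaleR[OF matrix_vector_mul_bounded_linear])
next
  fix x :: "real^'k^'d"
  show "1 / real CARD('k) * norm x \<le> matrix_onorm x"
    using norm_le_card_matrix_onorm[of x] by (simp add: field_simps)
  show "matrix_onorm x \<le> 1 * norm x" using matrix_onorm_le_norm by simp
qed simp

interpretation frobenius: equivalent_norm "norm :: real^'d^'k \<Rightarrow> real" 1 1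
  by standard (auto simp: norm_triangle_ineq)

lemma norm_matrix_mult_le_1:
  fixes Q :: "real^'k^'d" and B :: "real^'n^'k"
  assumes "matrix_onorm Q \<le> 1" and "norm B \<le> 1"
  shows "norm (Q ** B) \<le> 1"
  using norm_matrix_mult_le_onorm[of Q B] mult_le_one[OF assms(1) norm_ge_zero assms(2)] by linarith

lemma bdd_above_inner_matrix_mult:
  fixes G :: "real^'d^'d"
  shows "bdd_above {G \<bullet> (Q ** B) | (Q::real^'k^'d) (B::real^'d^'k). matrix_onorm Q \<le> 1 \<and> norm B \<le> 1}"
proof (rule bdd_aboveI)
  fix v assume "v \<in> {G \<bullet> (Q ** B) | (Q::real^'k^'d) (B::real^'d^'k). matrix_onorm Q \<le> 1 \<and> norm B \<le> 1}"
  then obtain Q :: "real^'k^'d" and B :: "real^'d^'k"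
    where "v = G \<bullet> (Q ** B)" "norm (Q ** B) \<le> 1"
    by (auto simp: norm_matrix_mult_le_1)
  then show "v \<le> norm G"
    by (metis mult_left_le norm_cauchy_schwarz norm_ge_zero order_trans)
qed

text \<open>With \<open>S\<close> the supremum of \<open>G \<bullet> (Q ** B)\<close> over the two unit balls, approximating \<open>Q\<close> and
  \<open>B\<close> by net points within \<open>1/4\<close> gives \<open>S \<le> s + S/4 + S/4\<close>.\<close>

lemma inner_le_twice_net_bound:
  fixes G :: "real^'d^'d" and FQ :: "(real^'k^'d) set" and FB :: "(real^'d^'k) set"
    and Q :: "real^'k^'d" and B :: "real^'d^'k"
  assumes FQ: "\<And>Q. Q \<in> FQ \<Longrightarrow> matrix_onorm Q \<le> 1"
    and netQ: "\<And>Q. matrix_onorm Q \<le> 1 \<Longrightarrow> \<exists>Q0\<in>FQ. matrix_onorm (Q - Q0) \<le> 1/4"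
    and netB: "\<And>B. norm B \<le> 1 \<Longrightarrow> \<exists>B0\<in>FB. norm (B - B0) \<le> 1/4"
    and hyp: "\<And>Q B. Q \<in> FQ \<Longrightarrow> B \<in> FB \<Longrightarrow> G \<bullet> (Q ** B) \<le> s"
    and Q: "matrix_onorm Q \<le> 1" and B: "norm B \<le> 1"
  shows "G \<bullet> (Q ** B) \<le> 2 * s"
proof -
  define V where "V = {G \<bullet> (Q ** B) | (Q::real^'k^'d) (B::real^'d^'k). matrix_onorm Q \<le> 1 \<and> norm B \<le> 1}"
  have bdd: "bdd_above V"
    unfolding V_def by (rule bdd_above_inner_matrix_mult)
  have le_Sup: "G \<bullet> (Q ** B) \<le> Sup V" if "matrix_onorm Q \<le> 1" "norm B \<le> 1"
    for Q :: "real^'k^'d" and B :: "real^'d^'k"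
    using that by (intro cSup_upper bdd) (auto simp: V_def)
  have approx: "G \<bullet> (Q ** B) \<le> s + Sup V / 2" if QB: "matrix_onorm Q \<le> 1" "norm B \<le> 1"
    for Q :: "real^'k^'d" and B :: "real^'d^'k"
  proof -
    obtain Q0 where Q0: "Q0 \<in> FQ" "matrix_onorm (Q - Q0) \<le> 1/4" using netQ[OF QB(1)] by blast
    obtain B0 where B0: "B0 \<in> FB" "norm (B - B0) \<le> 1/4" using netB[OF QB(2)] by blast
    have "Q ** B = Q0 ** B0 + (1/4) *\<^sub>R ((4 *\<^sub>R (Q - Q0)) ** B) + (1/4) *\<^sub>R (Q0 ** (4 *\<^sub>R (B - B0)))"
      by (simp add: matrix_scalar_ac scalar_matrix_assoc[symmetric] matrix_diff_rdistrib
          matrix_diff_ldistrib algebra_simps)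
    then have "G \<bullet> (Q ** B) = G \<bullet> (Q0 ** B0) + (1/4) * (G \<bullet> ((4 *\<^sub>R (Q - Q0)) ** B))
        + (1/4) * (G \<bullet> (Q0 ** (4 *\<^sub>R (B - B0))))"
      by (simp add: inner_add_right)
    moreover have "G \<bullet> ((4 *\<^sub>R (Q - Q0)) ** B) \<le> Sup V"
      using Q0 QB matrix_onorm.homogeneous[of 4 "Q - Q0"] by (intro le_Sup) auto
    moreover have "G \<bullet> (Q0 ** (4 *\<^sub>R (B - B0))) \<le> Sup V"
      using B0 FQ[OF Q0(1)] by (intro le_Sup) auto
    ultimately show ?thesis using hyp[OF Q0(1) B0(1)] by linarith
  qed
  have "V \<noteq> {}" unfolding V_def using Q B by blast
  then have "Sup V \<le> s + Sup V / 2"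
  proof (rule cSup_least)
    fix x assume "x \<in> V"
    then obtain Q :: "real^'k^'d" and B :: "real^'d^'k"
      where "x = G \<bullet> (Q ** B)" "matrix_onorm Q \<le> 1" "norm B \<le> 1"
      unfolding V_def by blast
    then show "x \<le> s + Sup V / 2" using approx by simp
  qed
  then show ?thesis using le_Sup[OF Q B] by simp
qed

lemma inner_le_of_factored_net:
  fixes G Z :: "real^'d^'d" and FQ :: "(real^'k^'d) set" and FB :: "(real^'d^'k) set"
  assumes FQ: "FQ \<subseteq> {Q. matrix_onorm Q \<le> 1}"
    and netQ: "\<And>Q. matrix_onorm Q \<le> 1 \<Longrightarrow> \<exists>Q0\<in>FQ. matrix_onorm (Q - Q0) \<le> 1/4"
    and netB: "\<And>B. norm B \<le> 1 \<Longrightarrow> \<exists>B0\<in>FB. norm (B - B0) \<le> 1/4"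
    and hyp: "\<And>Q B. Q \<in> FQ \<Longrightarrow> B \<in> FB \<Longrightarrow> G \<bullet> (Q ** B) \<le> s"
    and rk: "rank Z \<le> CARD('k)"
  shows "G \<bullet> Z \<le> 2 * s * norm Z"
proof (cases "Z = 0")
  case False
  obtain Q :: "real^'k^'d" and B :: "real^'d^'k"
    where QB: "Z = Q ** B" "\<And>x. norm (Q *v x) \<le> norm x" "norm B = norm Z"
    using low_rank_factorization[OF rk] by metis
  have "matrix_onorm Q \<le> 1" by (rule onorm_le) (simp add: QB(2))
  moreover have "norm ((1 / norm Z) *\<^sub>R B) \<le> 1" using QB(3) False by simp
  ultimately have "G \<bullet> (Q ** ((1 / norm Z) *\<^sub>R B)) \<le> 2 * s"
    using FQ by (intro inner_le_twice_net_bound[OF _ netQ netB hyp]) auto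
  then show ?thesis
    using False by (simp add: QB(1) matrix_scalar_ac scalar_matrix_assoc[symmetric] field_simps)
qed simp

lemma low_rank_net:
  obtains Zs :: "(real^'d^'d) set"
  where "finite Zs" and "real (card Zs) \<le> 81 ^ (CARD('d) * CARD('k::finite))"
    and "\<And>Z. Z \<in> Zs \<Longrightarrow> rank Z \<le> CARD('k) \<and> norm Z \<le> 1"
    and "\<And>G s Z. (\<And>Z'. Z' \<in> Zs \<Longrightarrow> G \<bullet> Z' \<le> s) \<Longrightarrow> rank Z \<le> CARD('k) \<Longrightarrow> G \<bullet> Z \<le> 2 * s * norm Z"
proof -
  obtain FQ :: "(real^'k^'d) set" where FQ: "finite FQ" "FQ \<subseteq> {Q. matrix_onorm Q \<le> 1}"
      "real (card FQ) \<le> 9 ^ (CARD('d) * CARD('k))"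
      "\<And>Q. matrix_onorm Q \<le> 1 \<Longrightarrow> \<exists>Q0\<in>FQ. matrix_onorm (Q - Q0) \<le> 1/4"
    using matrix_onorm.exists_net[of "1/4" "{Q. matrix_onorm Q \<le> 1}"] by auto
  obtain FB :: "(real^'d^'k) set" where FB: "finite FB" "FB \<subseteq> {B. norm B \<le> 1}"
      "real (card FB) \<le> 9 ^ (CARD('d) * CARD('k))"
      "\<And>B. norm B \<le> 1 \<Longrightarrow> \<exists>B0\<in>FB. norm (B - B0) \<le> 1/4"
    using frobenius.exists_net[of "1/4" "{B. norm B \<le> 1}"] by (auto simp: mult.commute)
  define Zs where "Zs = (\<lambda>(Q, B). Q ** B) ` (FQ \<times> FB)"
  show thesis
  proof
    show "finite Zs" using FQ FB by (simp add: Zs_def)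
    have "real (card Zs) \<le> real (card FQ) * real (card FB)"
      unfolding Zs_def by (metis card_cartesian_product card_image_le finite_cartesian_product FQ(1) FB(1) of_nat_le_iff of_nat_mult)
    also have "\<dots> \<le> 9 ^ (CARD('d) * CARD('k)) * 9 ^ (CARD('d) * CARD('k))"
      using FQ(3) FB(3) by (intro mult_mono) auto
    finally show "real (card Zs) \<le> 81 ^ (CARD('d) * CARD('k))"
      by (simp add: power_mult_distrib[symmetric])
  next
    fix Z assume "Z \<in> Zs"
    then obtain Q B where QB: "Z = Q ** B" "Q \<in> FQ" "B \<in> FB" by (auto simp: Zs_def)
    have "norm Z \<le> 1" using FQ(2) FB(2) QB by (auto intro: norm_matrix_mult_le_1)
    then show "rank Z \<le> CARD('k) \<and> norm Z \<le> 1"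
      using rank_matrix_mult_le_card[of Q B] QB by simp
  next
    fix G :: "real^'d^'d" and s and Z :: "real^'d^'d"
    assume "\<And>Z'. Z' \<in> Zs \<Longrightarrow> G \<bullet> Z' \<le> s" and "rank Z \<le> CARD('k)"
    then show "G \<bullet> Z \<le> 2 * s * norm Z"
      using FQ(2,4) FB(4) by (intro inner_le_of_factored_net[of FQ FB]) (auto simp: Zs_def)
  qed
qed

section \<open>Subgaussian sums\<close>

context prob_space
begin

lemma subgaussian_sum_mgf_le:
  fixes eps :: "'a \<Rightarrow> nat \<Rightarrow> real" and c :: "nat \<Rightarrow> real"
  assumes rv: "\<And>i. i < N \<Longrightarrow> (\<lambda>x. eps x i) \<in> borel_measurable M"
    and indep: "indep_vars (\<lambda>_. borel) (\<lambda>i x. eps x i) {..<N}"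
    and subg: "\<And>i. i < N \<Longrightarrow> subgaussian M (\<lambda>x. eps x i) \<sigma>"
  shows "(\<integral>\<^sup>+x. ennreal (exp (l * (\<Sum>i<N. c i * eps x i))) \<partial>M)
    \<le> ennreal (exp (l^2 / 2 * (\<sigma>^2 * (\<Sum>i<N. (c i)^2))))"
proof -
  have "(\<integral>\<^sup>+x. ennreal (exp (l * (\<Sum>i<N. c i * eps x i))) \<partial>M)
      = (\<integral>\<^sup>+x. (\<Prod>i<N. ennreal (exp (l * c i * eps x i))) \<partial>M)"
    by (intro nn_integral_cong) (simp add: sum_distrib_left exp_sum prod_ennreal mult.assoc)
  also have "\<dots> = (\<Prod>i<N. \<integral>\<^sup>+x. ennreal (exp (l * c i * eps x i)) \<partial>M)"
    by (intro indep_vars_nn_integral indep_vars_compose2[OF indep]) auto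
  also have "\<dots> \<le> (\<Prod>i<N. ennreal (exp ((l * c i)^2 * \<sigma>^2 / 2)))"
  proof (intro prod_mono_ennreal)
    fix i assume "i \<in> {..<N}"
    then have "integrable M (\<lambda>x. exp (l * c i * eps x i))"
      and mgf: "(\<integral>x. exp (l * c i * eps x i) \<partial>M) \<le> exp ((l * c i)^2 * \<sigma>^2 / 2)"
      using subg unfolding subgaussian_def by auto
    then show "(\<integral>\<^sup>+x. ennreal (exp (l * c i * eps x i)) \<partial>M) \<le> ennreal (exp ((l * c i)^2 * \<sigma>^2 / 2))"
      by (subst nn_integral_eq_integral) (auto intro: ennreal_leI)
  qed
  also have "\<dots> = ennreal (exp (\<Sum>i<N. (l * c i)^2 * \<sigma>^2 / 2))"
    by (simp add: exp_sum prod_ennreal)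
  also have "(\<Sum>i<N. (l * c i)^2 * \<sigma>^2 / 2) = l^2 / 2 * (\<sigma>^2 * (\<Sum>i<N. (c i)^2))"
    by (simp add: sum_distrib_left sum_divide_distrib power_mult_distrib mult_ac)
  finally show ?thesis .
qed

lemma subgaussian_sum_tail:
  fixes eps :: "'a \<Rightarrow> nat \<Rightarrow> real" and c :: "nat \<Rightarrow> real"
  assumes rv: "\<And>i. i < N \<Longrightarrow> (\<lambda>x. eps x i) \<in> borel_measurable M"
    and indep: "indep_vars (\<lambda>_. borel) (\<lambda>i x. eps x i) {..<N}"
    and subg: "\<And>i. i < N \<Longrightarrow> subgaussian M (\<lambda>x. eps x i) \<sigma>"
    and V: "\<sigma>^2 * (\<Sum>i<N. (c i)^2) \<le> V" "V > 0" and s: "s > 0"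
  shows "prob {x\<in>space M. (\<Sum>i<N. c i * eps x i) \<ge> s} \<le> exp (- (s^2) / (2 * V))"
proof -
  define l where "l = s / V"
  have l: "l > 0" using s V by (simp add: l_def)
  have "(\<lambda>x. \<Sum>i<N. c i * eps x i) \<in> borel_measurable M"
    using rv by measurable
  then have "emeasure M {x\<in>space M. (\<Sum>i<N. c i * eps x i) \<ge> s}
      \<le> ennreal (exp (-l * s)) * (\<integral>\<^sup>+x. ennreal (exp (l * (\<Sum>i<N. c i * eps x i))) * indicator (space M) x \<partial>M)"
    by (intro Chernoff_ineq_nn_integral_ge l) auto
  also have "(\<integral>\<^sup>+x. ennreal (exp (l * (\<Sum>i<N. c i * eps x i))) * indicator (space M) x \<partial>M)
      = (\<integral>\<^sup>+x. ennreal (exp (l * (\<Sum>i<N. c i * eps x i))) \<partial>M)"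
    by (intro nn_integral_cong) simp
  also have "\<dots> \<le> ennreal (exp (l^2 / 2 * (\<sigma>^2 * (\<Sum>i<N. (c i)^2))))"
    using rv indep subg by (rule subgaussian_sum_mgf_le)
  also have "\<dots> \<le> ennreal (exp (l^2 / 2 * V))"
    using V by (intro ennreal_leI) (simp add: mult_left_mono)
  finally have "emeasure M {x\<in>space M. (\<Sum>i<N. c i * eps x i) \<ge> s}
      \<le> ennreal (exp (-l * s)) * ennreal (exp (l^2 / 2 * V))"
    by (simp add: mult_left_mono)
  also have "\<dots> = ennreal (exp (-l * s + l^2 / 2 * V))"
    by (simp add: ennreal_mult[symmetric] flip: exp_add)
  also have "-l * s + l^2 / 2 * V = - (s^2) / (2 * V)"
    using V by (simp add: l_def power2_eq_square field_simps)
  finally show ?thesis by (simp add: emeasure_eq_measure)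
qed

lemma subgaussian_sums_union_bound:
  fixes eps :: "'a \<Rightarrow> nat \<Rightarrow> real" and c :: "'p \<Rightarrow> nat \<Rightarrow> real"
  assumes F: "finite F"
    and rv: "\<And>i. i < N \<Longrightarrow> (\<lambda>x. eps x i) \<in> borel_measurable M"
    and indep: "indep_vars (\<lambda>_. borel) (\<lambda>i x. eps x i) {..<N}"
    and subg: "\<And>i. i < N \<Longrightarrow> subgaussian M (\<lambda>x. eps x i) \<sigma>"
    and var: "\<And>p. p \<in> F \<Longrightarrow> \<sigma>^2 * (\<Sum>i<N. (c p i)^2) \<le> V" and V: "V > 0" and L: "L > 0"
  defines "E \<equiv> {x\<in>space M. \<forall>p\<in>F. (\<Sum>i<N. c p i * eps x i) < sqrt (2 * V * L)}"
  shows "E \<in> events" and "prob E \<ge> 1 - card F * exp (- L)"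
proof -
  define s where "s = sqrt (2 * V * L)"
  define Bad where "Bad p = {x\<in>space M. (\<Sum>i<N. c p i * eps x i) \<ge> s}" for p
  have Bad: "Bad p \<in> events" for p
    unfolding Bad_def using rv by measurable
  have E: "E = space M - (\<Union>p\<in>F. Bad p)"
    by (auto simp: E_def Bad_def s_def not_le)
  then show "E \<in> events" using F Bad by auto
  have "s > 0" "s^2 / (2 * V) = L" using V L by (simp_all add: s_def)
  then have tail: "prob (Bad p) \<le> exp (- L)" if "p \<in> F" for p
    using subgaussian_sum_tail[OF rv indep subg var[OF that] V \<open>s > 0\<close>] by (simp add: Bad_def)
  have "prob (\<Union>p\<in>F. Bad p) \<le> (\<Sum>p\<in>F. prob (Bad p))"
    by (rule measure_UNION_le[OF F]) (use Bad in auto)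
  also have "\<dots> \<le> card F * exp (- L)"
    using sum_mono[OF tail] by simp
  moreover have "(\<Union>p\<in>F. Bad p) \<in> events" using F Bad by auto
  ultimately show "prob E \<ge> 1 - card F * exp (- L)"
    using prob_compl[of "\<Union>p\<in>F. Bad p"] by (simp add: E)
qed

end

section \<open>Least squares under the restricted condition\<close>

lemma rank_gram_diff_le:
  fixes U V :: "real^'r^'d"
  shows "rank (U ** transpose U - V ** transpose V) \<le> 2 * CARD('r)"
proof -
  define W :: "real^('r + 'r)^'d" where "W = (\<chi> i c. case c of Inl a \<Rightarrow> U$i$a | Inr a \<Rightarrow> V$i$a)"
  define W' :: "real^'d^('r + 'r)" where "W' = (\<chi> c j. case c of Inl a \<Rightarrow> U$j$a | Inr a \<Rightarrow> - V$j$a)"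
  have "(W ** W') $ i $ j = (U ** transpose U - V ** transpose V) $ i $ j" for i j
  proof -
    have "(W ** W') $ i $ j = (\<Sum>a\<in>UNIV. U$i$a * U$j$a) + (\<Sum>a\<in>UNIV. V$i$a * (- V$j$a))"
      unfolding matrix_matrix_mult_def UNIV_Plus_UNIV[symmetric]
      by (subst sum.Plus) (auto simp: W_def W'_def)
    then show ?thesis
      by (simp add: matrix_matrix_mult_def transpose_def sum_negf)
  qed
  then have "U ** transpose U - V ** transpose V = W ** W'" by (simp add: vec_eq_iff)
  then show ?thesis using rank_matrix_mult_le_card[of W W'] by simp
qed

lemma RWC_bounds:
  assumes "RWC k a b A n" and "rank Z \<le> k"
  shows "a * n * (norm Z)^2 \<le> opnormsq A n Z" and "opnormsq A n Z \<le> b * n * (norm Z)^2"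
  using assms by (cases "n = 0"; auto simp: RWC_def opnormsq_def field_simps)+

lemma RWC_imp_pos:
  fixes A :: "nat \<Rightarrow> real^'d^'d"
  assumes rwc: "RWC k a b A n" and k: "1 \<le> k"
  shows "0 < a" and "a \<le> b" and "0 < n"
proof -
  obtain i :: 'd where True by simp
  define Z :: "real^'d^'d" where "Z = (columnvector (axis i 1) :: real^1^'d) ** rowvector (axis i 1)"
  have "Z $ i $ i = 1"
    by (simp add: Z_def matrix_matrix_mult_def columnvector_def rowvector_def)
  then have Z: "(norm Z)^2 > 0" by auto
  have "rank Z \<le> k"
    using rank_matrix_mult_le_card[of "columnvector (axis i 1) :: real^1^'d" "rowvector (axis i 1)"] k
    by (simp add: Z_def)
  then have bounds: "a * (norm Z)^2 \<le> opnormsq A n Z / n" "opnormsq A n Z / n \<le> b * (norm Z)^2"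
    using rwc by (auto simp: RWC_def)
  then have "a * (norm Z)^2 \<le> b * (norm Z)^2" by linarith
  then show "a \<le> b" using Z by (simp add: mult_le_cancel_right_pos)
  with rwc show "0 < a" by (auto simp: RWC_def)
  then have "opnormsq A n Z / n > 0" using bounds Z by (smt (verit) mult_pos_pos)
  then show "0 < n" by (cases "n = 0") auto
qed

lemma RWC_unscale:
  fixes A :: "nat \<Rightarrow> real^'d^'d" and d n :: nat
  assumes rwc: "RWC k (\<alpha> / real d ^ 2) (\<beta> / real d ^ 2) A (d^2 * n)" and k: "1 \<le> k" and d: "0 < d"
  shows "0 < \<alpha>" and "\<alpha> \<le> \<beta>" and "0 < n" and "0 < 3 * \<alpha> - 2 * \<beta>"
    and "rank Z \<le> k \<Longrightarrow> \<alpha> * n * (norm Z)^2 \<le> opnormsq A (d^2 * n) Z"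
    and "rank Z \<le> k \<Longrightarrow> opnormsq A (d^2 * n) Z \<le> \<beta> * n * (norm Z)^2"
proof -
  have "0 < \<alpha> / real d ^ 2" "\<alpha> / real d ^ 2 \<le> \<beta> / real d ^ 2" "0 < d^2 * n"
    using RWC_imp_pos[OF rwc k] by auto
  then show "0 < \<alpha>" "\<alpha> \<le> \<beta>" "0 < n"
    using d by (simp_all add: zero_less_divide_iff divide_le_cancel)
  show "0 < 3 * \<alpha> - 2 * \<beta>"
    using rwc d by (simp add: RWC_def field_simps)
  have "\<alpha> / real d ^ 2 * real (d^2 * n) = \<alpha> * n" "\<beta> / real d ^ 2 * real (d^2 * n) = \<beta> * n"
    using d by simp_all
  then show "rank Z \<le> k \<Longrightarrow> \<alpha> * n * (norm Z)^2 \<le> opnormsq A (d^2 * n) Z"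
    and "rank Z \<le> k \<Longrightarrow> opnormsq A (d^2 * n) Z \<le> \<beta> * n * (norm Z)^2"
    using RWC_bounds[OF rwc] by metis+
qed

lemma least_squares_basic_inequality:
  fixes A :: "nat \<Rightarrow> real^'d^'d" and e :: "nat \<Rightarrow> real"
  assumes "(\<Sum>i<N. (e i - A i \<bullet> D)^2) \<le> (\<Sum>i<N. (e i)^2)"
  shows "opnormsq A N D \<le> 2 * ((\<Sum>i<N. e i *\<^sub>R A i) \<bullet> D)"
proof -
  have "(\<Sum>i<N. (e i - A i \<bullet> D)^2) = (\<Sum>i<N. (e i)^2) - 2 * (\<Sum>i<N. e i * (A i \<bullet> D)) + opnormsq A N D"
    by (simp add: opnormsq_def power2_diff sum.distrib sum_subtractf sum_distrib_left mult.assoc)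
  then show ?thesis
    using assms by (simp add: inner_sum_left mult.commute)
qed

lemma gram_error_le:
  fixes Uh Up :: "real^'r^'d" and A :: "nat \<Rightarrow> real^'d^'d" and e :: "nat \<Rightarrow> real"
  defines "D \<equiv> Uh ** transpose Uh - Up ** transpose Up"
  assumes N: "0 < N"
    and min: "loss A N (\<lambda>i. A i \<bullet> (Up ** transpose Up) + e i) Uh
      \<le> loss A N (\<lambda>i. A i \<bullet> (Up ** transpose Up) + e i) Up"
    and a: "0 < a" and lower: "a * (norm D)^2 \<le> opnormsq A N D"
    and t: "0 \<le> t" and noise: "(\<Sum>i<N. e i *\<^sub>R A i) \<bullet> D \<le> t * norm D"
  shows "norm D \<le> 2 * t / a"
proof -
  have "(\<Sum>i<N. (e i - A i \<bullet> D)^2) \<le> (\<Sum>i<N. (e i)^2)"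
    using min N by (simp add: loss_def D_def divide_le_cancel algebra_simps)
  then have "a * (norm D)^2 \<le> 2 * t * norm D"
    using lower least_squares_basic_inequality noise by fastforce
  then show ?thesis
    using a t by (cases "norm D = 0") (auto simp: power2_eq_square field_simps)
qed

lemma ell_le_of_noise_bound:
  fixes Uh Up Ug :: "real^'r^'d" and A :: "nat \<Rightarrow> real^'d^'d" and e :: "nat \<Rightarrow> real"
  assumes rk: "rank Up = CARD('r)" and N: "0 < N"
    and min: "loss A N (\<lambda>i. A i \<bullet> (Up ** transpose Up) + e i) Uh
      \<le> loss A N (\<lambda>i. A i \<bullet> (Up ** transpose Up) + e i) Up"
    and a: "0 < a" and lower: "\<And>Z. rank Z \<le> 2 * CARD('r) \<Longrightarrow> a * (norm Z)^2 \<le> opnormsq A N Z"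
    and t: "0 \<le> t" and noise: "\<And>Z. rank Z \<le> 2 * CARD('r) \<Longrightarrow> (\<Sum>i<N. e i *\<^sub>R A i) \<bullet> Z \<le> t * norm Z"
  shows "ell Uh Ug \<le> norm21 (Ug - Up) + norm21 (Up ** (procR Uh Up - procR Uh Ug))
    + sqrt (5 * real CARD('d)) / (2 * sigma_r Up) * (2 * t / a)"
proof -
  have "norm (Uh ** transpose Uh - Up ** transpose Up) \<le> 2 * t / a"
    using N min a t lower noise rank_gram_diff_le by (intro gram_error_le) auto
  then have "sqrt (5 * real CARD('d)) / (2 * sigma_r Up) * norm (Uh ** transpose Uh - Up ** transpose Up)
      \<le> sqrt (5 * real CARD('d)) / (2 * sigma_r Up) * (2 * t / a)"
    using sigma_r_pos[OF rk] by (intro mult_left_mono) simp_all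
  then show ?thesis using ell_le_gram_error[OF rk, of Uh Ug] by linarith
qed

lemma (in prob_space) low_rank_noise_bound:
  fixes A :: "nat \<Rightarrow> real^'d^'d" and eps :: "'a \<Rightarrow> nat \<Rightarrow> real"
  assumes rv: "\<And>i. i < N \<Longrightarrow> (\<lambda>x. eps x i) \<in> borel_measurable M"
    and indep: "indep_vars (\<lambda>_. borel) (\<lambda>i x. eps x i) {..<N}"
    and subg: "\<And>i. i < N \<Longrightarrow> subgaussian M (\<lambda>x. eps x i) \<sigma>" and \<sigma>: "\<sigma> \<noteq> 0"
    and upper: "\<And>Z. rank Z \<le> CARD('k::finite) \<Longrightarrow> opnormsq A N Z \<le> b * (norm Z)^2" and b: "0 < b"
    and L: "0 < L" and card: "81 ^ (CARD('d) * CARD('k)) * exp (- L) \<le> \<delta>"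
  obtains E where "E \<in> events" and "prob E \<ge> 1 - \<delta>"
    and "\<And>x Z. x \<in> E \<Longrightarrow> rank Z \<le> CARD('k) \<Longrightarrow>
      (\<Sum>i<N. eps x i *\<^sub>R A i) \<bullet> Z \<le> 2 * sqrt (2 * (\<sigma>^2 * b) * L) * norm Z"
proof -
  obtain Zs :: "(real^'d^'d) set" where Zs: "finite Zs" "real (card Zs) \<le> 81 ^ (CARD('d) * CARD('k))"
      "\<And>Z. Z \<in> Zs \<Longrightarrow> rank Z \<le> CARD('k) \<and> norm Z \<le> 1"
      "\<And>G s Z. (\<And>Z'. Z' \<in> Zs \<Longrightarrow> G \<bullet> Z' \<le> s) \<Longrightarrow> rank Z \<le> CARD('k) \<Longrightarrow> G \<bullet> Z \<le> 2 * s * norm Z"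
    using low_rank_net[where 'd = 'd and 'k = 'k] by blast
  define s where "s = sqrt (2 * (\<sigma>^2 * b) * L)"
  define E where "E = {x\<in>space M. \<forall>Z\<in>Zs. (\<Sum>i<N. (A i \<bullet> Z) * eps x i) < s}"
  have var: "\<sigma>^2 * (\<Sum>i<N. (A i \<bullet> Z)^2) \<le> \<sigma>^2 * b" if "Z \<in> Zs" for Z
  proof -
    have "opnormsq A N Z \<le> b * (norm Z)^2" using Zs(3)[OF that] by (intro upper) simp
    also have "\<dots> \<le> b" using Zs(3)[OF that] b by (simp add: mult_left_le power_le_one)
    finally show ?thesis by (simp add: opnormsq_def mult_left_mono)
  qed
  have "\<sigma>^2 * b > 0" using \<sigma> b by simp
  note union = subgaussian_sums_union_bound[where c = "\<lambda>Z i. A i \<bullet> Z", OF Zs(1) rv indep subg var this L]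
  show thesis
  proof (rule that)
    show "E \<in> events" using union(1) by (simp add: E_def s_def)
    have "real (card Zs) * exp (- L) \<le> \<delta>"
      using Zs(2) card by (meson exp_ge_zero mult_right_mono order_trans)
    then show "prob E \<ge> 1 - \<delta>" using union(2) by (simp add: E_def s_def)
    fix x and Z :: "real^'d^'d" assume x: "x \<in> E" and Z: "rank Z \<le> CARD('k)"
    have "(\<Sum>i<N. eps x i *\<^sub>R A i) \<bullet> Z' \<le> s" if "Z' \<in> Zs" for Z'
      using x that by (simp add: E_def inner_sum_left mult.commute less_imp_le)
    then show "(\<Sum>i<N. eps x i *\<^sub>R A i) \<bullet> Z \<le> 2 * sqrt (2 * (\<sigma>^2 * b) * L) * norm Z"
      unfolding s_def[symmetric] using Z by (rule Zs(4))
  qed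
qed

lemma covering_term_le:
  fixes d r :: nat and \<delta> :: real
  defines "L \<equiv> 2 * real r * (2 * real d + 1) * ln (36 * sqrt 2) + ln (2 / \<delta>)"
  assumes \<delta>: "0 < \<delta>" "\<delta> < 1"
  shows "0 < L" and "81 ^ (d * (2 * r)) * exp (- L) \<le> \<delta>"
proof -
  have "0 < ln (2 / \<delta>)" using \<delta> by (intro ln_gt_zero) simp
  moreover have "1 \<le> 36 * sqrt (2::real)" using real_sqrt_ge_one[of 2] by linarith
  ultimately show "0 < L" by (simp add: L_def add_nonneg_pos)
  have "1 \<le> sqrt (2::real)" by simp
  then have "(9::real) \<le> 36 * sqrt 2" by linarith
  then have ln: "ln 9 \<le> ln (36 * sqrt (2::real))" by simp
  have "4 * real d * real r \<le> 2 * real r * (2 * real d + 1)"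
    by (simp add: algebra_simps)
  then have "4 * real d * real r * ln 9 \<le> 2 * real r * (2 * real d + 1) * ln (36 * sqrt 2)"
    by (rule mult_mono[OF _ ln]) simp_all
  moreover have "ln (2 / \<delta>) = ln 2 - ln \<delta>" "0 \<le> ln (2::real)"
    using \<delta> by (simp_all add: ln_div)
  ultimately have "4 * real d * real r * ln 9 - L \<le> ln \<delta>"
    unfolding L_def by linarith
  then have "exp (4 * real d * real r * ln 9 - L) \<le> \<delta>"
    using \<delta> by (metis exp_le_cancel_iff exp_ln)
  moreover have "(81::real) ^ (d * (2 * r)) = exp (4 * real d * real r * ln 9)"
  proof -
    have "(81::real) ^ n = 9 ^ (2 * n)" for n by (simp add: power_mult)
    then have "(81::real) ^ (d * (2 * r)) = 9 ^ (4 * d * r)"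
      by (simp add: mult_ac)
    then show ?thesis using exp_of_nat_mult[of "4 * d * r" "ln (9::real)"] by simp
  qed
  ultimately show "81 ^ (d * (2 * r)) * exp (- L) \<le> \<delta>"
    by (simp flip: exp_add)
qed

lemma error_rate_le:
  fixes d n \<alpha> \<beta> \<sigma> L :: real
  assumes d: "0 < d" and n: "0 < n" and \<alpha>: "0 < \<alpha>" "\<alpha> \<le> \<beta>" and \<gamma>: "0 < 3 * \<alpha> - 2 * \<beta>"
    and \<sigma>: "0 < \<sigma>" and L: "0 \<le> L"
  shows "sqrt (5 * d) / (2 * \<sigma>) * (2 * (2 * sqrt (2 * ((d / 2)^2 * (\<beta> * n)) * L)) / (\<alpha> * n))
    \<le> 8 * d * sqrt (2 * \<beta>) / ((3 * \<alpha> - 2 * \<beta>) * \<sigma>) * sqrt (d * L / n)"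
    (is "?X \<le> ?T")
proof (rule power2_le_imp_le)
  define \<gamma> where "\<gamma> = 3 * \<alpha> - 2 * \<beta>"
  define K where "K = d^3 * \<beta> * L / (\<sigma>^2 * n)"
  have \<beta>: "0 < \<beta>" using \<alpha> by linarith
  have K: "0 \<le> K" using d \<beta> L n \<sigma> by (simp add: K_def)
  have "?X^2 = 5 * d * (16 * (2 * ((d / 2)^2 * (\<beta> * n)) * L)) / ((2 * \<sigma>)^2 * (\<alpha> * n)^2)"
    using d n \<beta> L by (simp add: power_mult_distrib power_divide)
  also have "\<dots> = 10 * K / \<alpha>^2"
    using n \<sigma> \<alpha> by (simp add: K_def power2_eq_square power3_eq_cube field_simps)
  also have "\<dots> \<le> 128 * K / \<gamma>^2"
  proof (rule frac_le)
    show "0 \<le> 128 * K" using K by simp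
    show "0 < \<gamma>^2" using \<gamma> by (simp add: \<gamma>_def)
    show "\<gamma>^2 \<le> \<alpha>^2" using \<gamma> \<alpha> by (intro power_mono) (simp_all add: \<gamma>_def)
  qed (use K in simp)
  also have "\<dots> = ?T^2"
    using d n \<beta> L \<sigma> \<gamma>
    by (simp add: K_def \<gamma>_def power2_eq_square power3_eq_cube field_simps)
  finally show "?X^2 \<le> ?T^2" .
  show "0 \<le> ?T" using d n \<beta> L \<sigma> \<gamma> by simp
qed

theorem corollary3:
  fixes Up Ug :: "real^'r^'d"
    and A :: "nat \<Rightarrow> real^'d^'d"
    and M :: "'a measure"
    and eps :: "'a \<Rightarrow> nat \<Rightarrow> real"
    and Uhat :: "'a \<Rightarrow> real^'r^'d"
    and np :: nat and \<alpha> \<beta> \<delta> :: real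
  defines "d \<equiv> CARD('d)" and "r \<equiv> CARD('r)"
  defines "N \<equiv> d^2 * np"
  defines "X \<equiv> (\<lambda>x i. A i \<bullet> (Up ** transpose Up) + eps x i)"
  assumes rankUp: "rank Up = r"
    and rwc: "RWC (2 * r) (\<alpha> / real d ^ 2) (\<beta> / real d ^ 2) A N"
    and P: "prob_space M"
    and rv: "\<And>i. i < N \<Longrightarrow> (\<lambda>x. eps x i) \<in> borel_measurable M"
    and indep: "prob_space.indep_vars M (\<lambda>_. borel) (\<lambda>i x. eps x i) {..<N}"
    and subg: "\<And>i. i < N \<Longrightarrow> subgaussian M (\<lambda>x. eps x i) (real d / 2)"
    and minim: "\<And>x (U::real^'r^'d). x \<in> space M \<Longrightarrow> loss A N (X x) (Uhat x) \<le> loss A N (X x) U"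
    and \<delta>: "0 < \<delta>" "\<delta> < 1"
  shows "\<exists>E \<in> sets M. measure M E \<ge> 1 - \<delta> \<and>
    (\<forall>x\<in>E. ell (Uhat x) Ug \<le> norm21 (Ug - Up)
        + norm21 (Up ** (procR (Uhat x) Up - procR (Uhat x) Ug))
        + 8 * real d * sqrt (2 * \<beta>) / ((3 * \<alpha> - 2 * \<beta>) * sigma_r Up)
          * sqrt (real d * (2 * real r * (2 * real d + 1) * ln (36 * sqrt 2) + ln (2 / \<delta>)) / real np))"
proof -
  interpret prob_space M by (rule P)
  have d: "0 < d" and k: "CARD('r + 'r) = 2 * CARD('r)" and "1 \<le> 2 * r"
    by (simp_all add: d_def r_def)
  note rwc = RWC_unscale[OF rwc[unfolded N_def] \<open>1 \<le> 2 * r\<close> d, folded N_def, unfolded r_def]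
  define L where "L = 2 * real r * (2 * real d + 1) * ln (36 * sqrt 2) + ln (2 / \<delta>)"
  note L = covering_term_le[where d = d and r = r, OF \<delta>, folded L_def]
  define t where "t = 2 * sqrt (2 * ((real d / 2)^2 * (\<beta> * np)) * L)"
  obtain E where E: "E \<in> events" "prob E \<ge> 1 - \<delta>"
    and noise: "\<And>x Z. x \<in> E \<Longrightarrow> rank Z \<le> CARD('r + 'r) \<Longrightarrow> (\<Sum>i<N. eps x i *\<^sub>R A i) \<bullet> Z \<le> t * norm Z"
    using low_rank_noise_bound[where 'k = "'r + 'r" and A = A and b = "\<beta> * np" and L = L and \<delta> = \<delta>,
        OF rv indep subg] L rwc d
    unfolding k t_def by (auto simp: d_def r_def)
  show ?thesis
  proof (intro bexI conjI ballI)
    fix x assume x: "x \<in> E"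
    have "ell (Uhat x) Ug \<le> norm21 (Ug - Up) + norm21 (Up ** (procR (Uhat x) Up - procR (Uhat x) Ug))
        + sqrt (5 * real d) / (2 * sigma_r Up) * (2 * t / (\<alpha> * np))"
      unfolding d_def
    proof (rule ell_le_of_noise_bound)
      show "loss A N (\<lambda>i. A i \<bullet> (Up ** transpose Up) + eps x i) (Uhat x)
          \<le> loss A N (\<lambda>i. A i \<bullet> (Up ** transpose Up) + eps x i) Up"
        using minim[of x Up] E(1) x sets.sets_into_space by (auto simp: X_def)
    qed (use rankUp rwc noise[OF x] L d in \<open>auto simp: r_def k t_def N_def\<close>)
    also have "\<dots> \<le> norm21 (Ug - Up) + norm21 (Up ** (procR (Uhat x) Up - procR (Uhat x) Ug))
        + 8 * real d * sqrt (2 * \<beta>) / ((3 * \<alpha> - 2 * \<beta>) * sigma_r Up) * sqrt (real d * L / real np)"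
      using d rwc L sigma_r_pos[of Up] rankUp unfolding t_def
      by (intro add_left_mono error_rate_le) (auto simp: r_def)
    finally show "ell (Uhat x) Ug \<le> norm21 (Ug - Up) + norm21 (Up ** (procR (Uhat x) Up - procR (Uhat x) Ug))
        + 8 * real d * sqrt (2 * \<beta>) / ((3 * \<alpha> - 2 * \<beta>) * sigma_r Up)
          * sqrt (real d * (2 * real r * (2 * real d + 1) * ln (36 * sqrt 2) + ln (2 / \<delta>)) / real np)"
      by (simp add: L_def)
  qed (use E in auto)
qed

end
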